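(* Let $E$ be a graph, $K$ a field with involution, $R$ an involutive $K$-algebra, and $t$ a canonical, $K$-linear, $R$-valued trace on $L_K(E)$. Then $t$ is positive if and only if (P) $t\big(v-\sum_{e\in I}\mathbf{r}(e)\big)\ge 0$ for every vertex $v$ and every finite subset $I\subseteq\mathbf{s}^{-1}(v)$.
   Context: A (directed) graph $E=(E^0,E^1,\mathbf{s},\mathbf{r})$ has vertex set $E^0$, edge set $E^1$, source and range maps; no finiteness or countability is assumed. A path is a vertex $v$ (length $0$, $\mathbf{s}(v)=\mathbf{r}(v)=v$) or a sequence $p=e_1\cdots e_n$ of edges with $\mathbf{r}(e_i)=\mathbf{s}(e_{i+1})$, $\mathbf{s}(p)=\mathbf{s}(e_1)$, $\mathbf{r}(p)=\mathbf{r}(e_n)$. A vertex $v$ is regular if $\mathbf{s}^{-1}(v)$ is nonempty and finite. $K$ is a field with an arbitrary involution $a\mapsto a^*$ (possibly the identity). $L_K(E)$ is the free $K$-algebra generated by $E^0\cup E^1\cup\{e^*:e\in E^1\}$ subject to (V) $vw=\delta_{v,w}v$; (E1) $\mathbf{s}(e)e=e\mathbf{r}(e)=e$; (E2) $\mathbf{r}(e)e^*=e^*\mathbf{s}(e)=e^*$; (CK1) $e^*f=\delta_{e,f}\mathbf{r}(e)$; (CK2) $v=\sum_{e\in\mathbf{s}^{-1}(v)}ee^*$ for regular $v$; with $p^*=e_n^*\cdots e_1^*$, $v^*=v$, it is an involutive $K$-algebra via $(\sum a_ip_iq_i^* )^*=\sum a_i^*q_ip_i^*$. An involutive $K$-algebra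 is a $K$-algebra with an involution (additive, $(xy)^*=y^*x^*$, $x^{**}=x$) such that $(ax)^*=a^*x^*$ for $a\in K$. An element $x$ is positive, $x\ge0$, if it is a finite sum of elements $zz^*$; $x\ge y$ means $x-y\ge 0$. A trace is an additive map with $t(xy)=t(yx)$; $K$-linear means $t(ax)=at(x)$; $t$ is positive if $x\ge0$ implies $t(x)\ge0$. A trace $t$ on $L_K(E)$ is canonical if $t(pq^* )=\delta_{p,q}\,t(\mathbf{r}(p))$ for all paths $p,q$ with $\mathbf{r}(p)=\mathbf{r}(q)$. *)

theory Defs
  imports Main "Graph_Theory.Digraph"
begin

text \<open>A (directed) graph E = (E0, E1, s, r) is a pre_digraph G with verts G = E0,
  arcs G = E1, tail G = s (source) and head G = r (range), satisfying wf_digraph G.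
  No finiteness or countability is assumed.\<close>

definition regular_vertex :: "('v,'e) pre_digraph \<Rightarrow> 'v \<Rightarrow> bool" where
  "regular_vertex G v \<longleftrightarrow> out_arcs G v \<noteq> {} \<and> finite (out_arcs G v)"

text \<open>Paths: a pair (v, es); es = [] is the vertex path v (length 0), otherwise es
  is a nonempty sequence of edges e1...en with r(ei) = s(e(i+1)) and s(e1) = v.\<close>

definition is_path :: "('v,'e) pre_digraph \<Rightarrow> 'v \<times> 'e list \<Rightarrow> bool" where
  "is_path G p \<longleftrightarrow> (case p of (v, es) \<Rightarrow>
      v \<in> verts G \<and> set es \<subseteq> arcs G \<and>
      (es \<noteq> [] \<longrightarrow> tail G (hd es) = v) \<and>
      (\<forall>i. Suc i < length es \<longrightarrow> head G (es ! i) = tail G (es ! Suc i)))"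

definition path_range :: "('v,'e) pre_digraph \<Rightarrow> 'v \<times> 'e list \<Rightarrow> 'v" where
  "path_range G p = (case p of (v, es) \<Rightarrow> if es = [] then v else head G (last es))"

definition field_involution :: "('k::field \<Rightarrow> 'k) \<Rightarrow> bool" where
  "field_involution cj \<longleftrightarrow>
     (\<forall>a b. cj (a + b) = cj a + cj b) \<and> (\<forall>a b. cj (a * b) = cj a * cj b) \<and>
     (\<forall>a. cj (cj a) = a)"

definition involutive_algebra ::
  "('k::field \<Rightarrow> 'k) \<Rightarrow> ('k \<Rightarrow> 'r::ring \<Rightarrow> 'r) \<Rightarrow> ('r \<Rightarrow> 'r) \<Rightarrow> bool" where
  "involutive_algebra cj sm st \<longleftrightarrow>
     (\<forall>a x y. sm a (x + y) = sm a x + sm a y) \<and>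
     (\<forall>a b x. sm (a + b) x = sm a x + sm b x) \<and>
     (\<forall>a b x. sm (a * b) x = sm a (sm b x)) \<and>
     (\<forall>x. sm 1 x = x) \<and>
     (\<forall>a x y. sm a (x * y) = sm a x * y) \<and>
     (\<forall>a x y. sm a (x * y) = x * sm a y) \<and>
     (\<forall>x y. st (x + y) = st x + st y) \<and>
     (\<forall>x y. st (x * y) = st y * st x) \<and>
     (\<forall>x. st (st x) = x) \<and>
     (\<forall>a x. st (sm a x) = sm (cj a) (st x))"

definition is_positive ::
  "'a set \<Rightarrow> ('a \<Rightarrow> 'a \<Rightarrow> 'a) \<Rightarrow> 'a \<Rightarrow> ('a \<Rightarrow> 'a \<Rightarrow> 'a) \<Rightarrow> ('a \<Rightarrow> 'a) \<Rightarrow> 'a \<Rightarrow> bool" where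
  "is_positive S add zero mul st x \<longleftrightarrow>
     (\<exists>zs. set zs \<subseteq> S \<and> x = foldr (\<lambda>z acc. add (mul z (st z)) acc) zs zero)"

abbreviation ring_positive :: "('r::ring \<Rightarrow> 'r) \<Rightarrow> 'r \<Rightarrow> bool" where
  "ring_positive st x \<equiv> is_positive UNIV (+) 0 (*) st x"

datatype ('v,'e) gen = GV 'v | GE 'e | GG 'e  (* vertex, edge, ghost edge e^* *)

definition valid_gen :: "('v,'e) pre_digraph \<Rightarrow> ('v,'e) gen \<Rightarrow> bool" where
  "valid_gen G g = (case g of GV v \<Rightarrow> v \<in> verts G | GE e \<Rightarrow> e \<in> arcs G | GG e \<Rightarrow> e \<in> arcs G)"

type_synonym ('v,'e,'k) fa = "('v,'e) gen list \<Rightarrow> 'k"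

text \<open>Elements of the free non-unital algebra: finitely supported K-valued functions on
  nonempty words in the generators.\<close>

definition FA :: "('v,'e) pre_digraph \<Rightarrow> ('v,'e,'k::field) fa set" where
  "FA G = {f. f [] = 0 \<and> finite {w. f w \<noteq> 0} \<and>
              (\<forall>w. f w \<noteq> 0 \<longrightarrow> (\<forall>g\<in>set w. valid_gen G g))}"

definition fzero :: "('v,'e,'k::field) fa" where "fzero = (\<lambda>w. 0)"
definition fadd :: "('v,'e,'k::field) fa \<Rightarrow> ('v,'e,'k) fa \<Rightarrow> ('v,'e,'k) fa" where
  "fadd f g = (\<lambda>w. f w + g w)"
definition fsub :: "('v,'e,'k::field) fa \<Rightarrow> ('v,'e,'k) fa \<Rightarrow> ('v,'e,'k) fa" where
  "fsub f g = (\<lambda>w. f w - g w)"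
definition fsmult :: "'k::field \<Rightarrow> ('v,'e,'k) fa \<Rightarrow> ('v,'e,'k) fa" where
  "fsmult a f = (\<lambda>w. a * f w)"
definition fmul :: "('v,'e,'k::field) fa \<Rightarrow> ('v,'e,'k) fa \<Rightarrow> ('v,'e,'k) fa" where
  "fmul f g = (\<lambda>w. \<Sum>i\<le>length w. f (take i w) * g (drop i w))"
definition mono :: "('v,'e) gen list \<Rightarrow> ('v,'e,'k::field) fa" where
  "mono u = (\<lambda>w. if w = u then 1 else 0)"

fun gstar :: "('v,'e) gen \<Rightarrow> ('v,'e) gen" where
  "gstar (GV v) = GV v" | "gstar (GE e) = GG e" | "gstar (GG e) = GE e"

definition wstar :: "('v,'e) gen list \<Rightarrow> ('v,'e) gen list" where
  "wstar w = rev (map gstar w)"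

definition fstar :: "('k::field \<Rightarrow> 'k) \<Rightarrow> ('v,'e,'k) fa \<Rightarrow> ('v,'e,'k) fa" where
  "fstar cj f = (\<lambda>w. cj (f (wstar w)))"

inductive_set lpa_rels :: "('v,'e) pre_digraph \<Rightarrow> ('v,'e,'k::field) fa set" for G where
  relV: "v \<in> verts G \<Longrightarrow> w \<in> verts G \<Longrightarrow>
     fsub (mono [GV v, GV w]) (if v = w then mono [GV v] else fzero) \<in> lpa_rels G"
| relE1a: "e \<in> arcs G \<Longrightarrow> fsub (mono [GV (tail G e), GE e]) (mono [GE e]) \<in> lpa_rels G"
| relE1b: "e \<in> arcs G \<Longrightarrow> fsub (mono [GE e, GV (head G e)]) (mono [GE e]) \<in> lpa_rels G"
| relE2a: "e \<in> arcs G \<Longrightarrow> fsub (mono [GV (head G e), GG e]) (mono [GG e]) \<in> lpa_rels G"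
| relE2b: "e \<in> arcs G \<Longrightarrow> fsub (mono [GG e, GV (tail G e)]) (mono [GG e]) \<in> lpa_rels G"
| relCK1: "e \<in> arcs G \<Longrightarrow> f \<in> arcs G \<Longrightarrow>
     fsub (mono [GG e, GE f]) (if e = f then mono [GV (head G e)] else fzero) \<in> lpa_rels G"
| relCK2: "v \<in> verts G \<Longrightarrow> regular_vertex G v \<Longrightarrow>
     fsub (mono [GV v]) (\<lambda>w. \<Sum>e\<in>out_arcs G v. mono [GE e, GG e] w) \<in> lpa_rels G"

inductive_set lpa_ideal :: "('v,'e) pre_digraph \<Rightarrow> ('v,'e,'k::field) fa set" for G where
  gen: "x \<in> lpa_rels G \<Longrightarrow> x \<in> lpa_ideal G"
| zero: "fzero \<in> lpa_ideal G"
| add: "x \<in> lpa_ideal G \<Longrightarrow> y \<in> lpa_ideal G \<Longrightarrow> fadd x y \<in> lpa_ideal G"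
| smult: "x \<in> lpa_ideal G \<Longrightarrow> fsmult a x \<in> lpa_ideal G"
| mult_left: "x \<in> lpa_ideal G \<Longrightarrow> y \<in> FA G \<Longrightarrow> fmul y x \<in> lpa_ideal G"
| mult_right: "x \<in> lpa_ideal G \<Longrightarrow> y \<in> FA G \<Longrightarrow> fmul x y \<in> lpa_ideal G"

text \<open>Elements of L_K(E) are the cosets x + I of the ideal, x in the free algebra.\<close>

type_synonym ('v,'e,'k) lpa = "('v,'e,'k) fa set"

definition lcls :: "('v,'e) pre_digraph \<Rightarrow> ('v,'e,'k::field) fa \<Rightarrow> ('v,'e,'k) lpa" where
  "lcls G x = {y \<in> FA G. fsub x y \<in> lpa_ideal G}"

definition LPA :: "('v,'e) pre_digraph \<Rightarrow> ('v,'e,'k::field) lpa set" where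
  "LPA G = lcls G ` FA G"

definition lrep :: "('v,'e,'k::field) lpa \<Rightarrow> ('v,'e,'k) fa" where
  "lrep X = (SOME x. x \<in> X)"

definition lzero :: "('v,'e) pre_digraph \<Rightarrow> ('v,'e,'k::field) lpa" where
  "lzero G = lcls G fzero"
definition ladd :: "('v,'e) pre_digraph \<Rightarrow> ('v,'e,'k::field) lpa \<Rightarrow> ('v,'e,'k) lpa \<Rightarrow> ('v,'e,'k) lpa" where
  "ladd G X Y = lcls G (fadd (lrep X) (lrep Y))"
definition lsub :: "('v,'e) pre_digraph \<Rightarrow> ('v,'e,'k::field) lpa \<Rightarrow> ('v,'e,'k) lpa \<Rightarrow> ('v,'e,'k) lpa" where
  "lsub G X Y = lcls G (fsub (lrep X) (lrep Y))"
definition lmul :: "('v,'e) pre_digraph \<Rightarrow> ('v,'e,'k::field) lpa \<Rightarrow> ('v,'e,'k) lpa \<Rightarrow> ('v,'e,'k) lpa" where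
  "lmul G X Y = lcls G (fmul (lrep X) (lrep Y))"
definition lsmult :: "('v,'e) pre_digraph \<Rightarrow> 'k::field \<Rightarrow> ('v,'e,'k) lpa \<Rightarrow> ('v,'e,'k) lpa" where
  "lsmult G a X = lcls G (fsmult a (lrep X))"
definition lstar :: "('v,'e) pre_digraph \<Rightarrow> ('k::field \<Rightarrow> 'k) \<Rightarrow> ('v,'e,'k) lpa \<Rightarrow> ('v,'e,'k) lpa" where
  "lstar G cj X = lcls G (fstar cj (lrep X))"

text \<open>Vertex v, and the sum over a finite set I of edges of r(e) (with multiplicity:
  one summand per edge), as elements of L_K(E).\<close>

definition lvert :: "('v,'e) pre_digraph \<Rightarrow> 'v \<Rightarrow> ('v,'e,'k::field) lpa" where
  "lvert G v = lcls G (mono [GV v])"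

definition lrange_sum :: "('v,'e) pre_digraph \<Rightarrow> 'e set \<Rightarrow> ('v,'e,'k::field) lpa" where
  "lrange_sum G I = lcls G (\<lambda>w. \<Sum>e\<in>I. mono [GV (head G e)] w)"

definition lpath :: "('v,'e) pre_digraph \<Rightarrow> 'v \<times> 'e list \<Rightarrow> ('v,'e,'k::field) lpa" where
  "lpath G p = (case p of (v, es) \<Rightarrow>
      if es = [] then lvert G v else foldr (\<lambda>e acc. lmul G (lcls G (mono [GE e])) acc)
                                           (butlast es) (lcls G (mono [GE (last es)])))"

definition lpa_trace ::
  "('v,'e) pre_digraph \<Rightarrow> (('v,'e,'k::field) lpa \<Rightarrow> 'r::ring) \<Rightarrow> bool" where
  "lpa_trace G t \<longleftrightarrow>
     (\<forall>X\<in>LPA G. \<forall>Y\<in>LPA G. t (ladd G X Y) = t X + t Y) \<and>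
     (\<forall>X\<in>LPA G. \<forall>Y\<in>LPA G. t (lmul G X Y) = t (lmul G Y X))"

definition lpa_trace_K_linear ::
  "('v,'e) pre_digraph \<Rightarrow> ('k::field \<Rightarrow> 'r::ring \<Rightarrow> 'r) \<Rightarrow> (('v,'e,'k) lpa \<Rightarrow> 'r) \<Rightarrow> bool" where
  "lpa_trace_K_linear G sm t \<longleftrightarrow> (\<forall>a. \<forall>X\<in>LPA G. t (lsmult G a X) = sm a (t X))"

definition lpa_trace_canonical ::
  "('v,'e) pre_digraph \<Rightarrow> ('k::field \<Rightarrow> 'k) \<Rightarrow> (('v,'e,'k) lpa \<Rightarrow> 'r::ring) \<Rightarrow> bool" where
  "lpa_trace_canonical G cj t \<longleftrightarrow>
     (\<forall>p q. is_path G p \<longrightarrow> is_path G q \<longrightarrow> path_range G p = path_range G q \<longrightarrow>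
        t (lmul G (lpath G p) (lstar G cj (lpath G q))) =
          (if p = q then t (lvert G (path_range G p)) else 0))"

definition lpa_trace_positive ::
  "('v,'e) pre_digraph \<Rightarrow> ('k::field \<Rightarrow> 'k) \<Rightarrow> ('r::ring \<Rightarrow> 'r) \<Rightarrow> (('v,'e,'k) lpa \<Rightarrow> 'r) \<Rightarrow> bool" where
  "lpa_trace_positive G cj st t \<longleftrightarrow>
     (\<forall>X\<in>LPA G. is_positive (LPA G) (ladd G) (lzero G) (lmul G) (lstar G cj) X
                 \<longrightarrow> ring_positive st (t X))"

end

theory Submission
  imports Defs
begin

text \<open>Modulo the relations every monomial is either zero or equal to \<open>p q\<^sup>*\<close> for a pair of paths
  \<open>(p, q)\<close> with common range, and for a canonical trace the value of \<open>t((p q\<^sup>*)(p' q'\<^sup>*)\<^sup>*)\<close> is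
  \<open>t(r(p))\<close> at the longer pair if one pair arises from the other by appending the same path to
  both components, and \<open>0\<close> otherwise. These extensions organise the pairs into a forest, so for
  \<open>x = \<Sum>\<^sub>i c\<^sub>i p\<^sub>i q\<^sub>i\<^sup>*\<close> the value \<open>t(x x\<^sup>*)\<close> regroups over the nodes \<open>z\<close> of the finite forest generated
  by the \<open>(p\<^sub>i, q\<^sub>i)\<close> as \<open>\<Sum>\<^sub>z \<bar>b\<^sub>z\<bar>\<^sup>2 (t(r(z)) - \<Sum>\<^sub>e t(r(e)))\<close>, where \<open>b\<^sub>z\<close> sums the coefficients of
  the pairs below \<open>z\<close> and \<open>e\<close> runs over the edges leading to the children of \<open>z\<close>; each bracket is
  positive by (P). Conversely, \<open>v - \<Sum>\<^sub>e\<^sub>\<in>\<^sub>I e e\<^sup>*\<close> is a self-adjoint idempotent whose trace is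
  \<open>t(v - \<Sum>\<^sub>e\<^sub>\<in>\<^sub>I r(e))\<close>.\<close>

section \<open>Involutions and positive elements\<close>

lemma field_involution_simps:
  assumes "field_involution cj"
  shows "cj 0 = 0" "cj 1 = 1" "\<And>a. cj (- a) = - cj a" "\<And>a b. cj (a + b) = cj a + cj b"
    "\<And>a b. cj (a * b) = cj a * cj b" "\<And>a. cj (cj a) = a" "\<And>a b. cj (a - b) = cj a - cj b"
proof -
  have add: "\<And>a b. cj (a + b) = cj a + cj b" and mul: "\<And>a b. cj (a * b) = cj a * cj b"
    and inv: "\<And>a. cj (cj a) = a" using assms by (auto simp: field_involution_def)
  have "cj 0 = cj 0 + cj 0" using add[of 0 0] by simp
  then show zero: "cj 0 = 0" by (metis add.right_neutral add_left_cancel)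
  have "cj 1 = cj 1 * cj 1" using mul[of 1 1] by simp
  moreover have "cj 1 \<noteq> 0" using inv[of 1] zero by auto
  ultimately show "cj 1 = 1" by (metis mult_cancel_right1)
  show neg: "\<And>a. cj (- a) = - cj a" using add zero by (metis add.right_inverse add_eq_0_iff)
  show "\<And>a b. cj (a + b) = cj a + cj b" "\<And>a b. cj (a * b) = cj a * cj b" "\<And>a. cj (cj a) = a"
    by (fact add mul inv)+
  show "\<And>a b. cj (a - b) = cj a - cj b" using add neg by (metis diff_conv_add_uminus)
qed

lemma field_involution_sum: "field_involution cj \<Longrightarrow> cj (sum f A) = (\<Sum>i\<in>A. cj (f i))"
  by (induction A rule: infinite_finite_induct) (auto simp: field_involution_simps)

lemma involutive_algebra_sm:
  assumes "involutive_algebra cj sm st"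
  shows "\<And>x. sm 0 x = 0" "\<And>a. sm a 0 = 0" "\<And>a b x. sm (a + b) x = sm a x + sm b x"
    "\<And>a x y. sm a (x + y) = sm a x + sm a y" "\<And>a b x. sm (a * b) x = sm a (sm b x)"
    "\<And>x. sm 1 x = x" "\<And>a x y. sm a (x - y) = sm a x - sm a y"
    "\<And>a b x. sm (a - b) x = sm a x - sm b x" "\<And>a x. sm a (- x) = - sm a x"
    "\<And>a x. sm (- a) x = - sm a x"
proof -
  have add: "\<And>a x y. sm a (x + y) = sm a x + sm a y" "\<And>a b x. sm (a + b) x = sm a x + sm b x"
    and mult: "\<And>a b x. sm (a * b) x = sm a (sm b x)" and one: "\<And>x. sm 1 x = x"
    using assms by (auto simp: involutive_algebra_def)
  show zero: "\<And>x. sm 0 x = 0" "\<And>a. sm a 0 = 0"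
    using add(2)[of 0 0] add(1)[of _ 0 0] by (metis add.right_neutral add_left_cancel)+
  show neg: "\<And>a x. sm a (- x) = - sm a x" "\<And>a x. sm (- a) x = - sm a x"
    using add zero by (metis add.right_inverse add_eq_0_iff)+
  show "\<And>a x y. sm a (x - y) = sm a x - sm a y" "\<And>a b x. sm (a - b) x = sm a x - sm b x"
    using add neg by (metis diff_conv_add_uminus)+
qed (use assms in \<open>auto simp: involutive_algebra_def\<close>)

lemma sm_sum_left: "involutive_algebra cj sm st \<Longrightarrow> sm (sum f A) x = (\<Sum>i\<in>A. sm (f i) x)"
  by (induction A rule: infinite_finite_induct) (auto simp: involutive_algebra_sm)

lemma sm_sum_right: "involutive_algebra cj sm st \<Longrightarrow> sm a (sum f A) = (\<Sum>i\<in>A. sm a (f i))"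
  by (induction A rule: infinite_finite_induct) (auto simp: involutive_algebra_sm)

lemma foldr_sum_squares_shift:
  fixes st :: "'r::ring \<Rightarrow> 'r"
  shows "foldr (\<lambda>z acc. z * st z + acc) zs a = foldr (\<lambda>z acc. z * st z + acc) zs 0 + a"
  by (induction zs) (auto simp: add.assoc)

lemma ring_positive_iff: "ring_positive st x \<longleftrightarrow> (\<exists>zs. x = foldr (\<lambda>z acc. z * st z + acc) zs 0)"
  by (simp add: is_positive_def)

lemma ring_positive_0: "ring_positive st 0"
  unfolding ring_positive_iff by (rule exI[of _ "[]"]) simp

lemma ring_positive_add:
  fixes st :: "'r::ring \<Rightarrow> 'r"
  assumes "ring_positive st a" "ring_positive st b"
  shows "ring_positive st (a + b)"
proof -
  obtain zs1 zs2 where "a = foldr (\<lambda>z acc. z * st z + acc) zs1 0" "b = foldr (\<lambda>z acc. z * st z + acc) zs2 0"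
    using assms ring_positive_iff by metis
  then have "a + b = foldr (\<lambda>z acc. z * st z + acc) (zs1 @ zs2) 0"
    using foldr_sum_squares_shift[of st zs1 b] by simp
  then show ?thesis
    unfolding ring_positive_iff by blast
qed

lemma ring_positive_sum: "(\<And>i. i \<in> A \<Longrightarrow> ring_positive st (f i)) \<Longrightarrow> ring_positive st (sum f A)"
  by (induction A rule: infinite_finite_induct) (auto simp: ring_positive_0 ring_positive_add)

lemma sm_norm_square:
  assumes ia: "involutive_algebra cj sm st"
  shows "sm (b * cj b) (z * st z) = sm b z * st (sm b z)"
proof -
  have lin: "\<And>a x y. sm a (x * y) = sm a x * y" "\<And>a x y. sm a (x * y) = x * sm a y"
    and star: "\<And>a x. st (sm a x) = sm (cj a) (st x)"
    using ia by (auto simp: involutive_algebra_def)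
  have "sm b z * st (sm b z) = sm (cj b) (sm b z * st z)"
    by (simp add: star lin(2))
  also have "\<dots> = sm (cj b * b) (z * st z)"
    by (simp add: lin(1) involutive_algebra_sm[OF ia])
  finally show ?thesis
    by (simp add: mult.commute)
qed

lemma ring_positive_sm_norm:
  assumes ia: "involutive_algebra cj sm st" and "ring_positive st x"
  shows "ring_positive st (sm (b * cj b) x)"
proof -
  obtain zs where x: "x = foldr (\<lambda>z acc. z * st z + acc) zs 0"
    using assms ring_positive_iff by blast
  have "sm (b * cj b) x = foldr (\<lambda>z acc. z * st z + acc) (map (sm b) zs) 0"
    unfolding x by (induction zs) (simp_all add: involutive_algebra_sm(2,4)[OF ia] sm_norm_square[OF ia])
  then show ?thesis
    unfolding ring_positive_iff by blast
qed

section \<open>The free algebra\<close>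

definition flincomb :: "'i set \<Rightarrow> ('i \<Rightarrow> 'k::field) \<Rightarrow> ('i \<Rightarrow> ('v,'e,'k) fa) \<Rightarrow> ('v,'e,'k) fa" where
  "flincomb A c f = (\<lambda>w. \<Sum>i\<in>A. c i * f i w)"

definition valid_word :: "('v,'e) pre_digraph \<Rightarrow> ('v,'e) gen list \<Rightarrow> bool" where
  "valid_word G w \<longleftrightarrow> (\<forall>g\<in>set w. valid_gen G g)"

lemma valid_word_simps [simp]:
  "valid_word G []"
  "valid_word G (g # w) \<longleftrightarrow> valid_gen G g \<and> valid_word G w"
  "valid_word G (u @ w) \<longleftrightarrow> valid_word G u \<and> valid_word G w"
  by (auto simp: valid_word_def)

lemma valid_gen_simps [simp]:
  "valid_gen G (GV v) \<longleftrightarrow> v \<in> verts G"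
  "valid_gen G (GE e) \<longleftrightarrow> e \<in> arcs G"
  "valid_gen G (GG e) \<longleftrightarrow> e \<in> arcs G"
  by (auto simp: valid_gen_def)

lemma valid_word_map [simp]:
  "valid_word G (map GE es) \<longleftrightarrow> set es \<subseteq> arcs G"
  "valid_word G (map GG es) \<longleftrightarrow> set es \<subseteq> arcs G"
  by (auto simp: valid_word_def)

lemma gstar_gstar [simp]: "gstar (gstar g) = g"
  by (cases g) auto

lemma wstar_wstar [simp]: "wstar (wstar w) = w"
  by (simp add: wstar_def rev_map[symmetric] comp_def)

lemma wstar_append [simp]: "wstar (a @ b) = wstar b @ wstar a"
  by (simp add: wstar_def)

lemma wstar_Nil [simp]: "wstar [] = []"
  by (simp add: wstar_def)

lemma wstar_Cons: "wstar (g # w) = wstar w @ [gstar g]"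
  by (simp add: wstar_def)

lemma wstar_single [simp]: "wstar [g] = [gstar g]"
  by (simp add: wstar_def)

lemma length_wstar [simp]: "length (wstar w) = length w"
  by (simp add: wstar_def)

lemma wstar_eq_Nil_iff [simp]: "wstar a = [] \<longleftrightarrow> a = []"
  by (simp add: wstar_def)

lemma wstar_take: "wstar (take i w) = drop (length w - i) (wstar w)"
  by (simp add: wstar_def rev_take take_map[symmetric])

lemma wstar_drop: "wstar (drop i w) = take (length w - i) (wstar w)"
  by (simp add: wstar_def rev_drop drop_map[symmetric])

lemma wstar_map_GE [simp]: "wstar (map GE es) = map GG (rev es)"
  by (simp add: wstar_def rev_map)

lemma wstar_map_GG [simp]: "wstar (map GG es) = map GE (rev es)"
  by (simp add: wstar_def rev_map)

lemma valid_word_wstar [simp]: "valid_word G (wstar w) \<longleftrightarrow> valid_word G w"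
proof -
  have "valid_gen G (gstar g) = valid_gen G g" for g
    by (cases g) auto
  then show ?thesis
    by (auto simp: valid_word_def wstar_def)
qed

lemma fsub_conv_fadd: "fsub f g = fadd f (fsmult (-1) g)"
  by (simp add: fsub_def fadd_def fsmult_def fun_eq_iff)

lemma take_drop_eq_iff:
  "i \<le> length w \<Longrightarrow> (take i w = u \<and> drop i w = v) \<longleftrightarrow> (w = u @ v \<and> i = length u)"
  by (metis append_eq_conv_conj length_take min.absorb2)

lemma fmul_mono: "fmul (mono u) (mono v) = mono (u @ v)"
proof
  fix w
  have "fmul (mono u) (mono v) w = (\<Sum>i\<le>length w. if i = length u \<and> w = u @ v then 1 else 0)"
    unfolding fmul_def mono_def by (rule sum.cong) (auto simp: take_drop_eq_iff)
  also have "\<dots> = mono (u @ v) w"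
    by (auto simp: mono_def)
  finally show "fmul (mono u) (mono v) w = mono (u @ v) w" .
qed

lemma fmul_mono_Nil: "fmul (mono []) g = g" "fmul g (mono []) = g"
proof -
  show "fmul (mono []) g = g"
  proof
    fix w show "fmul (mono []) g w = g w"
      unfolding fmul_def mono_def by (subst sum.mono_neutral_right[of "{..length w}" "{0}"]) auto
  qed
  show "fmul g (mono []) = g"
  proof
    fix w show "fmul g (mono []) w = g w"
      unfolding fmul_def mono_def by (subst sum.mono_neutral_right[of "{..length w}" "{length w}"]) auto
  qed
qed

lemma fmul_flincomb_left: "fmul (flincomb A c f) g = flincomb A c (\<lambda>i. fmul (f i) g)"
  unfolding fmul_def flincomb_def
  by (auto simp: fun_eq_iff sum_distrib_left sum_distrib_right mult.assoc intro: sum.swap)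

lemma fmul_flincomb_right: "fmul g (flincomb A c f) = flincomb A c (\<lambda>i. fmul g (f i))"
  unfolding fmul_def flincomb_def
  by (auto simp: fun_eq_iff sum_distrib_left sum_distrib_right mult.assoc mult.left_commute
      intro: sum.swap)

lemma fmul_fzero [simp]: "fmul fzero g = fzero" "fmul g fzero = fzero"
  by (auto simp: fmul_def fzero_def fun_eq_iff)

lemma fmul_fsub:
  "fmul (fsub a b) c = fsub (fmul a c) (fmul b c)" "fmul c (fsub a b) = fsub (fmul c a) (fmul c b)"
  by (auto simp: fmul_def fsub_def fun_eq_iff sum_subtractf algebra_simps)

lemma flincomb_insert:
  "finite A \<Longrightarrow> a \<notin> A \<Longrightarrow> flincomb (insert a A) c f = fadd (fsmult (c a) (f a)) (flincomb A c f)"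
  by (auto simp: flincomb_def fadd_def fsmult_def fun_eq_iff)

lemma flincomb_empty [simp]: "flincomb {} c f = fzero"
  by (simp add: flincomb_def fzero_def)

lemma fsub_flincomb: "fsub (flincomb A c f) (flincomb A c g) = flincomb A c (\<lambda>i. fsub (f i) (g i))"
  by (auto simp: flincomb_def fsub_def fun_eq_iff sum_subtractf algebra_simps)

lemma flincomb_cong: "(\<And>i. i \<in> A \<Longrightarrow> f i = g i) \<Longrightarrow> flincomb A c f = flincomb A c g"
  by (auto simp: flincomb_def fun_eq_iff intro!: sum.cong)

lemma flincomb_delta:
  assumes "finite A" "a \<in> A"
  shows "flincomb A (\<lambda>_. 1) (\<lambda>b. if a = b then f else fzero) = f"
proof
  fix w
  have "flincomb A (\<lambda>_. 1) (\<lambda>b. if a = b then f else fzero) w = (\<Sum>b\<in>A. if a = b then f w else 0)"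
    by (auto simp: flincomb_def fzero_def intro!: sum.cong)
  then show "flincomb A (\<lambda>_. 1) (\<lambda>b. if a = b then f else fzero) w = f w"
    using assms by simp
qed

lemma FA_I:
  "f [] = 0 \<Longrightarrow> finite {w. f w \<noteq> 0} \<Longrightarrow> (\<And>w. f w \<noteq> 0 \<Longrightarrow> valid_word G w) \<Longrightarrow> f \<in> FA G"
  by (auto simp: FA_def valid_word_def)

lemma FA_D:
  "f \<in> FA G \<Longrightarrow> f [] = 0" "f \<in> FA G \<Longrightarrow> finite {w. f w \<noteq> 0}"
  "f \<in> FA G \<Longrightarrow> f w \<noteq> 0 \<Longrightarrow> valid_word G w"
  by (auto simp: FA_def valid_word_def)

lemma fzero_FA [simp]: "fzero \<in> FA G"
  by (auto simp: FA_def fzero_def)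

lemma mono_FA: "w \<noteq> [] \<Longrightarrow> valid_word G w \<Longrightarrow> mono w \<in> FA G"
  by (rule FA_I) (auto simp: mono_def split: if_splits)

lemma fadd_FA:
  assumes "f \<in> FA G" "g \<in> FA G"
  shows "fadd f g \<in> FA G"
proof (rule FA_I)
  show "fadd f g [] = 0"
    using assms by (simp add: fadd_def FA_D)
  show "finite {w. fadd f g w \<noteq> 0}"
    by (rule finite_subset[of _ "{w. f w \<noteq> 0} \<union> {w. g w \<noteq> 0}"])
      (use assms in \<open>auto simp: fadd_def FA_D\<close>)
  show "fadd f g w \<noteq> 0 \<Longrightarrow> valid_word G w" for w
    using assms FA_D(3)[of f G w] FA_D(3)[of g G w] by (cases "f w = 0") (auto simp: fadd_def)
qed

lemma fsmult_FA:
  assumes "f \<in> FA G"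
  shows "fsmult a f \<in> FA G"
proof (rule FA_I)
  show "fsmult a f [] = 0"
    using assms by (simp add: fsmult_def FA_D)
  show "finite {w. fsmult a f w \<noteq> 0}"
    by (rule finite_subset[of _ "{w. f w \<noteq> 0}"]) (use FA_D(2)[OF assms] in \<open>auto simp: fsmult_def\<close>)
  show "fsmult a f w \<noteq> 0 \<Longrightarrow> valid_word G w" for w
    using assms FA_D(3) by (force simp: fsmult_def)
qed

lemma fsub_FA: "f \<in> FA G \<Longrightarrow> g \<in> FA G \<Longrightarrow> fsub f g \<in> FA G"
  by (simp add: fsub_conv_fadd fadd_FA fsmult_FA)

lemma flincomb_FA: "finite A \<Longrightarrow> (\<And>i. i \<in> A \<Longrightarrow> f i \<in> FA G) \<Longrightarrow> flincomb A c f \<in> FA G"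
  by (induction A rule: finite_induct) (simp_all add: flincomb_insert fadd_FA fsmult_FA)

lemma fmul_FA:
  assumes "f \<in> FA G" "g \<in> FA G"
  shows "fmul f g \<in> FA G"
proof (rule FA_I)
  have split: "\<exists>i. f (take i w) * g (drop i w) \<noteq> 0" if "fmul f g w \<noteq> 0" for w
    using that unfolding fmul_def by (metis (mono_tags, lifting) sum.neutral)
  show "fmul f g [] = 0"
    using assms by (simp add: fmul_def FA_D)
  have "{w. fmul f g w \<noteq> 0} \<subseteq> (\<lambda>(a, b). a @ b) ` ({w. f w \<noteq> 0} \<times> {w. g w \<noteq> 0})"
  proof
    fix w assume "w \<in> {w. fmul f g w \<noteq> 0}"
    then obtain i where "f (take i w) * g (drop i w) \<noteq> 0"
      using split by blast
    then show "w \<in> (\<lambda>(a, b). a @ b) ` ({w. f w \<noteq> 0} \<times> {w. g w \<noteq> 0})"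
      by (auto intro!: image_eqI[of _ _ "(take i w, drop i w)"])
  qed
  then show "finite {w. fmul f g w \<noteq> 0}"
    by (rule finite_subset) (use FA_D(2)[OF assms(1)] FA_D(2)[OF assms(2)] in auto)
  fix w assume "fmul f g w \<noteq> 0"
  then obtain i where "f (take i w) * g (drop i w) \<noteq> 0"
    using split by blast
  then have "valid_word G (take i w)" "valid_word G (drop i w)"
    using assms FA_D(3) by force+
  then show "valid_word G w"
    by (metis append_take_drop_id valid_word_simps(3))
qed

lemma FA_eq_flincomb_mono:
  assumes "f \<in> FA G"
  shows "f = flincomb {w. f w \<noteq> 0} f mono"
proof
  fix w
  have "flincomb {w. f w \<noteq> 0} f mono w = (\<Sum>x\<in>{w. f w \<noteq> 0}. if x = w then f x else 0)"
    by (auto simp: flincomb_def mono_def intro!: sum.cong)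
  also have "\<dots> = f w"
    using FA_D(2)[OF assms] by simp
  finally show "f w = flincomb {w. f w \<noteq> 0} f mono w"
    by simp
qed

lemma fstar_FA:
  assumes "field_involution cj" "f \<in> FA G"
  shows "fstar cj f \<in> FA G"
proof (rule FA_I)
  have nz: "f (wstar w) \<noteq> 0" if "fstar cj f w \<noteq> 0" for w
    using that assms by (auto simp: fstar_def field_involution_simps)
  show "fstar cj f [] = 0"
    using assms by (simp add: fstar_def FA_D field_involution_simps)
  have "{w. fstar cj f w \<noteq> 0} \<subseteq> wstar ` {w. f w \<noteq> 0}"
    using nz by (auto intro!: image_eqI[of _ _ "wstar _"])
  then show "finite {w. fstar cj f w \<noteq> 0}"
    using assms FA_D finite_subset by blast
  show "fstar cj f w \<noteq> 0 \<Longrightarrow> valid_word G w" for w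
    using assms FA_D(3) nz valid_word_wstar by metis
qed

lemma fstar_mono: "field_involution cj \<Longrightarrow> fstar cj (mono w) = mono (wstar w)"
  by (auto simp: fstar_def mono_def fun_eq_iff field_involution_simps)

lemma fstar_fzero: "field_involution cj \<Longrightarrow> fstar cj fzero = fzero"
  by (auto simp: fstar_def fzero_def field_involution_simps)

lemma fstar_fadd: "field_involution cj \<Longrightarrow> fstar cj (fadd f g) = fadd (fstar cj f) (fstar cj g)"
  by (auto simp: fstar_def fadd_def fun_eq_iff field_involution_simps)

lemma fstar_fsub: "field_involution cj \<Longrightarrow> fstar cj (fsub f g) = fsub (fstar cj f) (fstar cj g)"
  by (auto simp: fstar_def fsub_def fun_eq_iff field_involution_simps)

lemma fstar_fsmult: "field_involution cj \<Longrightarrow> fstar cj (fsmult a f) = fsmult (cj a) (fstar cj f)"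
  by (auto simp: fstar_def fsmult_def fun_eq_iff field_involution_simps)

lemma fstar_flincomb:
  "field_involution cj \<Longrightarrow>
    fstar cj (flincomb A c f) = flincomb A (\<lambda>i. cj (c i)) (\<lambda>i. fstar cj (f i))"
  by (auto simp: fstar_def flincomb_def fun_eq_iff field_involution_simps field_involution_sum)

lemma fstar_fmul:
  fixes f g :: "('v,'e,'k::field) fa"
  assumes "field_involution cj"
  shows "fstar cj (fmul f g) = fmul (fstar cj g) (fstar cj f)"
proof
  fix w :: "('v,'e) gen list"
  let ?n = "length w" and ?w = "wstar w"
  have "fstar cj (fmul f g) w = (\<Sum>i\<le>?n. cj (f (take i ?w)) * cj (g (drop i ?w)))"
    using assms by (simp add: fstar_def fmul_def field_involution_sum field_involution_simps)
  also have "\<dots> = (\<Sum>i\<le>?n. cj (f (take (?n - i) ?w)) * cj (g (drop (?n - i) ?w)))"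
    using sum.nat_diff_reindex[of "\<lambda>i. cj (f (take i ?w)) * cj (g (drop i ?w))" "Suc ?n"]
    by (simp add: lessThan_Suc_atMost)
  also have "\<dots> = fmul (fstar cj g) (fstar cj f) w"
    unfolding fmul_def fstar_def by (rule sum.cong) (auto simp: wstar_take wstar_drop mult.commute)
  finally show "fstar cj (fmul f g) w = fmul (fstar cj g) (fstar cj f) w" .
qed

definition edge_ghost_sum :: "'e set \<Rightarrow> ('v,'e,'k::field) fa" where
  "edge_ghost_sum I = flincomb I (\<lambda>_. 1) (\<lambda>e. mono [GE e, GG e])"

lemma fstar_edge_ghost_sum: "field_involution cj \<Longrightarrow> fstar cj (edge_ghost_sum I) = edge_ghost_sum I"
  by (simp add: edge_ghost_sum_def fstar_flincomb fstar_mono field_involution_simps(2) wstar_def)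

lemma fstar_lpa_rels:
  fixes x :: "('v,'e,'k::field) fa" and G :: "('v,'e) pre_digraph"
  assumes cj: "field_involution cj" and "x \<in> lpa_rels G"
  shows "fstar cj x \<in> lpa_rels G"
  using assms(2)
proof cases
  case (relV v w)
  then show ?thesis
    using lpa_rels.relV[of w G v] cj by (auto simp: fstar_fsub fstar_mono fstar_fzero wstar_def)
next
  case (relE1a e)
  then show ?thesis
    using lpa_rels.relE2b[of e G] cj by (simp add: fstar_fsub fstar_mono wstar_def)
next
  case (relE1b e)
  then show ?thesis
    using lpa_rels.relE2a[of e G] cj by (simp add: fstar_fsub fstar_mono wstar_def)
next
  case (relE2a e)
  then show ?thesis
    using lpa_rels.relE1b[of e G] cj by (simp add: fstar_fsub fstar_mono wstar_def)
next
  case (relE2b e)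
  then show ?thesis
    using lpa_rels.relE1a[of e G] cj by (simp add: fstar_fsub fstar_mono wstar_def)
next
  case (relCK1 e f)
  then show ?thesis
    using lpa_rels.relCK1[of f G e] cj by (auto simp: fstar_fsub fstar_mono fstar_fzero wstar_def)
next
  case (relCK2 v)
  have "(\<lambda>w. \<Sum>e\<in>out_arcs G v. mono [GE e, GG e] w) = (edge_ghost_sum (out_arcs G v) :: ('v,'e,'k) fa)"
    by (simp add: edge_ghost_sum_def flincomb_def)
  then have "fstar cj x = x"
    using relCK2(1) by (simp add: fstar_fsub[OF cj] fstar_mono[OF cj] fstar_edge_ghost_sum[OF cj])
  then show ?thesis
    using assms(2) by simp
qed

lemma fstar_lpa_ideal:
  assumes cj: "field_involution cj"
  shows "x \<in> lpa_ideal G \<Longrightarrow> fstar cj x \<in> lpa_ideal G"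
proof (induction rule: lpa_ideal.induct)
  case (gen x)
  then show ?case by (simp add: fstar_lpa_rels cj lpa_ideal.gen)
next
  case zero
  then show ?case by (simp add: fstar_fzero cj lpa_ideal.zero)
next
  case (add x y)
  then show ?case by (simp add: fstar_fadd cj lpa_ideal.add)
next
  case (smult x a)
  then show ?case by (simp add: fstar_fsmult cj lpa_ideal.smult)
next
  case (mult_left x y)
  then show ?case by (simp add: fstar_fmul cj lpa_ideal.mult_right fstar_FA)
next
  case (mult_right x y)
  then show ?case by (simp add: fstar_fmul cj lpa_ideal.mult_left fstar_FA)
qed

section \<open>The Leavitt path algebra as a quotient\<close>

definition lpa_equiv :: "('v,'e) pre_digraph \<Rightarrow> ('v,'e,'k::field) fa \<Rightarrow> ('v,'e,'k) fa \<Rightarrow> bool" where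
  "lpa_equiv G f g \<longleftrightarrow> fsub f g \<in> lpa_ideal G"

lemma lpa_ideal_flincomb:
  "finite A \<Longrightarrow> (\<And>i. i \<in> A \<Longrightarrow> h i \<in> lpa_ideal G) \<Longrightarrow> flincomb A c h \<in> lpa_ideal G"
  by (induction A rule: finite_induct)
    (simp_all add: flincomb_insert lpa_ideal.zero lpa_ideal.add lpa_ideal.smult)

lemma lpa_equiv_refl [simp]: "lpa_equiv G f f"
proof -
  have "fsub f f = fzero"
    by (simp add: fsub_def fzero_def)
  then show ?thesis
    by (simp add: lpa_equiv_def lpa_ideal.zero)
qed

lemma lpa_equiv_sym: "lpa_equiv G f g \<Longrightarrow> lpa_equiv G g f"
proof -
  have "fsub g f = fsmult (-1) (fsub f g)"
    by (simp add: fsub_def fsmult_def fun_eq_iff)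
  then show "lpa_equiv G f g \<Longrightarrow> lpa_equiv G g f"
    by (simp add: lpa_equiv_def lpa_ideal.smult)
qed

lemma lpa_equiv_trans [trans]: "lpa_equiv G f g \<Longrightarrow> lpa_equiv G g h \<Longrightarrow> lpa_equiv G f h"
proof -
  have "fsub f h = fadd (fsub f g) (fsub g h)"
    by (simp add: fsub_def fadd_def fun_eq_iff)
  then show "lpa_equiv G f g \<Longrightarrow> lpa_equiv G g h \<Longrightarrow> lpa_equiv G f h"
    by (simp add: lpa_equiv_def lpa_ideal.add)
qed

lemma lpa_equiv_fadd:
  "lpa_equiv G f f' \<Longrightarrow> lpa_equiv G g g' \<Longrightarrow> lpa_equiv G (fadd f g) (fadd f' g')"
proof -
  have "fsub (fadd f g) (fadd f' g') = fadd (fsub f f') (fsub g g')"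
    by (simp add: fsub_def fadd_def fun_eq_iff)
  then show "lpa_equiv G f f' \<Longrightarrow> lpa_equiv G g g' \<Longrightarrow> ?thesis"
    by (simp add: lpa_equiv_def lpa_ideal.add)
qed

lemma lpa_equiv_fsmult: "lpa_equiv G f f' \<Longrightarrow> lpa_equiv G (fsmult a f) (fsmult a f')"
proof -
  have "fsub (fsmult a f) (fsmult a f') = fsmult a (fsub f f')"
    by (simp add: fsub_def fsmult_def fun_eq_iff algebra_simps)
  then show "lpa_equiv G f f' \<Longrightarrow> ?thesis"
    by (simp add: lpa_equiv_def lpa_ideal.smult)
qed

lemma lpa_equiv_fsub:
  "lpa_equiv G f f' \<Longrightarrow> lpa_equiv G g g' \<Longrightarrow> lpa_equiv G (fsub f g) (fsub f' g')"
  by (simp add: fsub_conv_fadd lpa_equiv_fadd lpa_equiv_fsmult)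

lemma lpa_equiv_fmul:
  assumes "f' \<in> FA G" "g \<in> FA G" "lpa_equiv G f f'" "lpa_equiv G g g'"
  shows "lpa_equiv G (fmul f g) (fmul f' g')"
proof -
  have "fsub (fmul f g) (fmul f' g') = fadd (fmul (fsub f f') g) (fmul f' (fsub g g'))"
    by (simp add: fmul_fsub) (simp add: fsub_def fadd_def fun_eq_iff)
  then show ?thesis
    using assms by (simp add: lpa_equiv_def lpa_ideal.add lpa_ideal.mult_left lpa_ideal.mult_right)
qed

lemma lpa_equiv_flincomb:
  "finite A \<Longrightarrow> (\<And>i. i \<in> A \<Longrightarrow> lpa_equiv G (f i) (g i)) \<Longrightarrow>
    lpa_equiv G (flincomb A c f) (flincomb A c g)"
  unfolding lpa_equiv_def fsub_flincomb by (rule lpa_ideal_flincomb) auto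

lemma lpa_equiv_fstar:
  "field_involution cj \<Longrightarrow> lpa_equiv G f g \<Longrightarrow> lpa_equiv G (fstar cj f) (fstar cj g)"
  by (simp add: lpa_equiv_def fstar_fsub[symmetric] fstar_lpa_ideal)

lemma lpa_rels_equiv: "fsub x y \<in> lpa_rels G \<Longrightarrow> lpa_equiv G x y"
  by (simp add: lpa_equiv_def lpa_ideal.gen)

lemma lcls_mem: "f \<in> FA G \<Longrightarrow> f \<in> lcls G f"
  by (simp add: lcls_def lpa_equiv_def[symmetric])

lemma lcls_eq: 
  assumes "lpa_equiv G f g"
  shows "lcls G f = lcls G g"
proof -
  have "lpa_equiv G f y \<longleftrightarrow> lpa_equiv G g y" for y
    using assms lpa_equiv_trans[of G f g y] lpa_equiv_trans[of G g f y] lpa_equiv_sym[of G f g] by blast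
  then show ?thesis
    unfolding lcls_def lpa_equiv_def[symmetric] by simp
qed

lemma lrep_lcls:
  assumes "f \<in> FA G"
  shows "lrep (lcls G f) \<in> FA G" "lpa_equiv G f (lrep (lcls G f))"
proof -
  have "lrep (lcls G f) \<in> lcls G f"
    unfolding lrep_def by (rule someI[of _ f]) (rule lcls_mem[OF assms])
  then show "lrep (lcls G f) \<in> FA G" "lpa_equiv G f (lrep (lcls G f))"
    by (auto simp: lcls_def lpa_equiv_def)
qed

lemma lcls_LPA: "f \<in> FA G \<Longrightarrow> lcls G f \<in> LPA G"
  by (simp add: LPA_def)

lemma lrep_FA: "X \<in> LPA G \<Longrightarrow> lrep X \<in> FA G"
  unfolding LPA_def using lrep_lcls(1) by blast

lemma lcls_lrep: "X \<in> LPA G \<Longrightarrow> lcls G (lrep X) = X"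
  unfolding LPA_def using lrep_lcls(2) lcls_eq by (metis imageE)

lemma ladd_lcls: "f \<in> FA G \<Longrightarrow> g \<in> FA G \<Longrightarrow> ladd G (lcls G f) (lcls G g) = lcls G (fadd f g)"
  unfolding ladd_def by (metis lpa_equiv_fadd lpa_equiv_sym lcls_eq lrep_lcls)

lemma ladd_LPA: "X \<in> LPA G \<Longrightarrow> Y \<in> LPA G \<Longrightarrow> ladd G X Y \<in> LPA G"
  unfolding ladd_def by (intro lcls_LPA fadd_FA lrep_FA)

lemma lsub_lcls: "f \<in> FA G \<Longrightarrow> g \<in> FA G \<Longrightarrow> lsub G (lcls G f) (lcls G g) = lcls G (fsub f g)"
  unfolding lsub_def by (metis lpa_equiv_fsub lpa_equiv_sym lcls_eq lrep_lcls)

lemma lmul_lcls: "f \<in> FA G \<Longrightarrow> g \<in> FA G \<Longrightarrow> lmul G (lcls G f) (lcls G g) = lcls G (fmul f g)"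
  unfolding lmul_def by (metis lpa_equiv_fmul lpa_equiv_sym lcls_eq lrep_lcls)

lemma lsmult_lcls: "f \<in> FA G \<Longrightarrow> lsmult G a (lcls G f) = lcls G (fsmult a f)"
  unfolding lsmult_def by (metis lpa_equiv_fsmult lpa_equiv_sym lcls_eq lrep_lcls)

lemma lstar_lcls:
  "field_involution cj \<Longrightarrow> f \<in> FA G \<Longrightarrow> lstar G cj (lcls G f) = lcls G (fstar cj f)"
  unfolding lstar_def by (metis lpa_equiv_fstar lpa_equiv_sym lcls_eq lrep_lcls)

lemma lmul_lstar_self:
  assumes "field_involution cj" "X \<in> LPA G"
  shows "lmul G X (lstar G cj X) = lcls G (fmul (lrep X) (fstar cj (lrep X)))"
proof -
  have "lstar G cj X = lcls G (fstar cj (lrep X))"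
    using lstar_lcls[OF assms(1) lrep_FA] lcls_lrep assms(2) by metis
  then show ?thesis
    using lmul_lcls[OF lrep_FA fstar_FA[OF assms(1) lrep_FA]] lcls_lrep assms(2) by metis
qed

section \<open>Paths\<close>

lemma is_path_Nil: "is_path G (u, []) \<longleftrightarrow> u \<in> verts G"
  by (simp add: is_path_def)

lemma path_range_Nil [simp]: "path_range G (u, []) = u"
  by (simp add: path_range_def)

lemma path_range_Cons: "path_range G (u, e # es) = path_range G (head G e, es)"
  by (simp add: path_range_def)

lemma path_range_append: "path_range G (u, es @ cs) = path_range G (path_range G (u, es), cs)"
  by (induction es arbitrary: u) (auto simp: path_range_Cons)

lemma is_path_Cons:
  assumes "wf_digraph G"
  shows "is_path G (u, e # es) \<longleftrightarrow>
    u \<in> verts G \<and> e \<in> arcs G \<and> tail G e = u \<and> is_path G (head G e, es)"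
proof -
  have "(\<forall>i. Suc i < length (e # es) \<longrightarrow> head G ((e # es) ! i) = tail G ((e # es) ! Suc i))
     \<longleftrightarrow> (es \<noteq> [] \<longrightarrow> tail G (hd es) = head G e) \<and>
         (\<forall>i. Suc i < length es \<longrightarrow> head G (es ! i) = tail G (es ! Suc i))"
    (is "?L \<longleftrightarrow> ?R")
  proof
    assume L: ?L
    show ?R
    proof (intro conjI impI allI)
      assume "es \<noteq> []"
      then show "tail G (hd es) = head G e"
        using L[rule_format, of 0] by (cases es) auto
    next
      fix i assume "Suc i < length es"
      then show "head G (es ! i) = tail G (es ! Suc i)"
        using L[rule_format, of "Suc i"] by auto
    qed
  next
    assume R: ?R
    show ?L
    proof (intro allI impI)
      fix i assume "Suc i < length (e # es)"
      then show "head G ((e # es) ! i) = tail G ((e # es) ! Suc i)"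
        using R by (cases i) (auto simp: hd_conv_nth)
    qed
  qed
  then show ?thesis
    using assms unfolding is_path_def by (auto simp: wf_digraph.head_in_verts)
qed

lemma is_path_append:
  assumes "wf_digraph G"
  shows "is_path G (u, es @ cs) \<longleftrightarrow> is_path G (u, es) \<and> is_path G (path_range G (u, es), cs)"
proof (induction es arbitrary: u)
  case Nil
  then show ?case by (auto simp: is_path_def)
next
  case (Cons e es)
  then show ?case by (auto simp: is_path_Cons[OF assms] path_range_Cons)
qed

lemma is_path_verts: "is_path G p \<Longrightarrow> fst p \<in> verts G"
  by (auto simp: is_path_def)

lemma is_path_arcs: "is_path G (u, es) \<Longrightarrow> set es \<subseteq> arcs G"
  by (auto simp: is_path_def)

lemma path_range_verts:
  assumes "wf_digraph G" "is_path G (u, es)"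
  shows "path_range G (u, es) \<in> verts G"
  using assms(2)
proof (induction es arbitrary: u)
  case Nil
  then show ?case by (simp add: is_path_def)
next
  case (Cons e es)
  then show ?case by (simp add: is_path_Cons[OF assms(1)] path_range_Cons)
qed

section \<open>Monomials modulo the relations\<close>

text \<open>The argument \<open>cj\<close> of the two predicates below only serves to fix the field of scalars.\<close>

definition mono_equiv ::
  "('v,'e) pre_digraph \<Rightarrow> ('k::field \<Rightarrow> 'k) \<Rightarrow> ('v,'e) gen list \<Rightarrow> ('v,'e) gen list \<Rightarrow> bool" where
  "mono_equiv G cj u v \<longleftrightarrow> lpa_equiv G (mono u :: ('v,'e,'k) fa) (mono v)"

definition mono_null :: "('v,'e) pre_digraph \<Rightarrow> ('k::field \<Rightarrow> 'k) \<Rightarrow> ('v,'e) gen list \<Rightarrow> bool" where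
  "mono_null G cj u \<longleftrightarrow> lpa_equiv G (mono u :: ('v,'e,'k) fa) fzero"

type_synonym ('v,'e) ppair = "('v \<times> 'e list) \<times> ('v \<times> 'e list)"

text \<open>A path is written with its source vertex in front; by (E1) this does not change its value,
  and it treats vertex paths uniformly with the others.\<close>

definition path_word :: "'v \<times> 'e list \<Rightarrow> ('v,'e) gen list" where
  "path_word p = GV (fst p) # map GE (snd p)"

definition pair_word :: "('v,'e) ppair \<Rightarrow> ('v,'e) gen list" where
  "pair_word x = path_word (fst x) @ wstar (path_word (snd x))"

definition path_pair :: "('v,'e) pre_digraph \<Rightarrow> ('v,'e) ppair \<Rightarrow> bool" where
  "path_pair G x \<longleftrightarrow>
     is_path G (fst x) \<and> is_path G (snd x) \<and> path_range G (fst x) = path_range G (snd x)"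

text \<open>The word of \<open>q\<^sup>* p\<close> for paths \<open>q = (v, fs)\<close> and \<open>p = (v, fs')\<close>, with the shared source written once.\<close>

definition cross_word :: "'v \<Rightarrow> 'e list \<Rightarrow> 'e list \<Rightarrow> ('v,'e) gen list" where
  "cross_word v fs fs' = map GG (rev fs) @ [GV v] @ map GE fs'"

lemma pair_word_eq:
  "pair_word ((u, es), (u', fs)) = GV u # map GE es @ map GG (rev fs) @ [GV u']"
  by (simp add: pair_word_def path_word_def wstar_Cons)

lemma valid_word_path_word: "is_path G p \<Longrightarrow> valid_word G (path_word p)"
  by (cases p) (auto simp: path_word_def is_path_def)

lemma valid_word_pair_word: "path_pair G x \<Longrightarrow> valid_word G (pair_word x)"
  by (auto simp: pair_word_def path_pair_def valid_word_path_word)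

lemma pair_word_not_Nil: "pair_word x \<noteq> []"
  by (simp add: pair_word_def path_word_def)

locale lpa_graph =
  fixes G :: "('v,'e) pre_digraph" and cj :: "'k::field \<Rightarrow> 'k"
  assumes wf: "wf_digraph G" and cj: "field_involution cj"
begin

abbreviation word_equiv :: "('v,'e) gen list \<Rightarrow> ('v,'e) gen list \<Rightarrow> bool" (infix "\<approx>" 50) where
  "u \<approx> v \<equiv> mono_equiv G cj u v"

abbreviation null_word :: "('v,'e) gen list \<Rightarrow> bool" where
  "null_word u \<equiv> mono_null G cj u"

lemma head_tail_verts: "e \<in> arcs G \<Longrightarrow> head G e \<in> verts G" "e \<in> arcs G \<Longrightarrow> tail G e \<in> verts G"
  using wf by (auto simp: wf_digraph.head_in_verts wf_digraph.tail_in_verts)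

lemma word_equiv_refl [simp]: "u \<approx> u"
  by (simp add: mono_equiv_def)

lemma word_equiv_sym: "u \<approx> v \<Longrightarrow> v \<approx> u"
  unfolding mono_equiv_def by (rule lpa_equiv_sym)

lemma word_equiv_trans [trans]: "u \<approx> v \<Longrightarrow> v \<approx> w \<Longrightarrow> u \<approx> w"
  unfolding mono_equiv_def by (rule lpa_equiv_trans)

lemma null_word_equiv: "u \<approx> v \<Longrightarrow> null_word v \<Longrightarrow> null_word u"
  unfolding mono_equiv_def mono_null_def by (rule lpa_equiv_trans)

lemma word_equiv_wstar: "u \<approx> v \<Longrightarrow> wstar u \<approx> wstar v"
  unfolding mono_equiv_def using lpa_equiv_fstar[OF cj] by (metis fstar_mono[OF cj])

lemma lpa_equiv_context:
  assumes "valid_word G a" "valid_word G b" "f \<in> FA G" "g \<in> FA G" "lpa_equiv G f g"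
  shows "lpa_equiv G (fmul (mono a) (fmul f (mono b))) (fmul (mono a) (fmul g (mono b)))"
proof -
  have right: "lpa_equiv G (fmul f (mono b)) (fmul g (mono b))"
    using assms by (cases "b = []") (auto simp: fmul_mono_Nil intro!: lpa_equiv_fmul mono_FA)
  have "fmul f (mono b) \<in> FA G"
    using assms by (cases "b = []") (auto simp: fmul_mono_Nil fmul_FA mono_FA)
  then show ?thesis
    using assms right by (cases "a = []") (auto simp: fmul_mono_Nil intro!: lpa_equiv_fmul mono_FA)
qed

lemma word_equiv_context:
  assumes "m \<approx> m'" "m \<noteq> []" "m' \<noteq> []" "valid_word G m" "valid_word G m'"
    "valid_word G a" "valid_word G b" "u = a @ m @ b" "v = a @ m' @ b"
  shows "u \<approx> v"
  using lpa_equiv_context[OF assms(6,7) mono_FA[OF assms(2,4)] mono_FA[OF assms(3,5)]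
      assms(1)[unfolded mono_equiv_def]] assms(8,9)
  by (simp add: fmul_mono mono_equiv_def)

lemma null_word_context:
  assumes "null_word m" "m \<noteq> []" "valid_word G m" "valid_word G a" "valid_word G b" "u = a @ m @ b"
  shows "null_word u"
  using lpa_equiv_context[OF assms(4,5) mono_FA[OF assms(2,3)] fzero_FA assms(1)[unfolded mono_null_def]]
    assms(6)
  by (simp add: fmul_mono mono_null_def)

lemma vertex_idem: "v \<in> verts G \<Longrightarrow> [GV v, GV v] \<approx> [GV v]"
  using lpa_rels_equiv[OF lpa_rels.relV[of v G v]] by (simp add: mono_equiv_def)

lemma vertex_orth: "v \<in> verts G \<Longrightarrow> w \<in> verts G \<Longrightarrow> v \<noteq> w \<Longrightarrow> null_word [GV v, GV w]"
  using lpa_rels_equiv[OF lpa_rels.relV[of v G w]] by (simp add: mono_null_def)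

lemma source_edge: "e \<in> arcs G \<Longrightarrow> [GV (tail G e), GE e] \<approx> [GE e]"
  using lpa_rels_equiv[OF lpa_rels.relE1a[of e G]] by (simp add: mono_equiv_def)

lemma edge_range: "e \<in> arcs G \<Longrightarrow> [GE e, GV (head G e)] \<approx> [GE e]"
  using lpa_rels_equiv[OF lpa_rels.relE1b[of e G]] by (simp add: mono_equiv_def)

lemma range_ghost: "e \<in> arcs G \<Longrightarrow> [GV (head G e), GG e] \<approx> [GG e]"
  using lpa_rels_equiv[OF lpa_rels.relE2a[of e G]] by (simp add: mono_equiv_def)

lemma ghost_source: "e \<in> arcs G \<Longrightarrow> [GG e, GV (tail G e)] \<approx> [GG e]"
  using lpa_rels_equiv[OF lpa_rels.relE2b[of e G]] by (simp add: mono_equiv_def)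

lemma ghost_edge: "e \<in> arcs G \<Longrightarrow> [GG e, GE e] \<approx> [GV (head G e)]"
  using lpa_rels_equiv[OF lpa_rels.relCK1[of e G e]] by (simp add: mono_equiv_def)

lemma ghost_edge_orth: "e \<in> arcs G \<Longrightarrow> f \<in> arcs G \<Longrightarrow> e \<noteq> f \<Longrightarrow> null_word [GG e, GE f]"
  using lpa_rels_equiv[OF lpa_rels.relCK1[of e G f]] by (simp add: mono_null_def)

lemma edge_vertex_orth:
  assumes "v \<in> verts G" "e \<in> arcs G" "v \<noteq> head G e"
  shows "null_word [GE e, GV v]"
proof -
  have "[GE e, GV v] \<approx> [GE e, GV (head G e), GV v]"
    by (rule word_equiv_context[OF word_equiv_sym[OF edge_range], of e "[]" "[GV v]"])
      (auto simp: assms head_tail_verts)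
  moreover have "null_word [GE e, GV (head G e), GV v]"
    by (rule null_word_context[OF vertex_orth[of "head G e" v], of "[GE e]" "[]"])
      (auto simp: assms head_tail_verts)
  ultimately show ?thesis
    by (rule null_word_equiv)
qed

lemma ghost_vertex_orth:
  assumes "v \<in> verts G" "e \<in> arcs G" "v \<noteq> tail G e"
  shows "null_word [GG e, GV v]"
proof -
  have "[GG e, GV v] \<approx> [GG e, GV (tail G e), GV v]"
    by (rule word_equiv_context[OF word_equiv_sym[OF ghost_source], of e "[]" "[GV v]"])
      (auto simp: assms head_tail_verts)
  moreover have "null_word [GG e, GV (tail G e), GV v]"
    by (rule null_word_context[OF vertex_orth[of "tail G e" v], of "[GG e]" "[]"])
      (auto simp: assms head_tail_verts)
  ultimately show ?thesis
    by (rule null_word_equiv)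
qed

abbreviation pair_reducible :: "('v,'e) gen list \<Rightarrow> bool" where
  "pair_reducible w \<equiv> null_word w \<or> (\<exists>y. path_pair G y \<and> w \<approx> pair_word y)"

lemma path_pair_components:
  assumes "path_pair G ((u, es), (u', fs))"
  shows "u \<in> verts G" "u' \<in> verts G" "set es \<subseteq> arcs G" "set fs \<subseteq> arcs G"
  using assms is_path_verts is_path_arcs by (fastforce simp: path_pair_def)+

lemma vertex_mult_pair_word:
  assumes a: "a \<in> verts G" and x: "path_pair G ((u, es), (u', fs))"
  shows "pair_reducible (GV a # pair_word ((u, es), (u', fs)))"
proof (cases "a = u")
  case True
  have "GV a # pair_word ((u, es), (u', fs)) \<approx> pair_word ((u, es), (u', fs))"
    by (rule word_equiv_context[OF vertex_idem[OF a], of "[]" "map GE es @ map GG (rev fs) @ [GV u']"])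
      (use a path_pair_components[OF x] in \<open>auto simp: True pair_word_eq\<close>)
  then show ?thesis
    using x by blast
next
  case False
  have "null_word (GV a # pair_word ((u, es), (u', fs)))"
    by (rule null_word_context[OF vertex_orth[OF a _ False], of "[]" "map GE es @ map GG (rev fs) @ [GV u']"])
      (use a path_pair_components[OF x] in \<open>auto simp: pair_word_eq\<close>)
  then show ?thesis ..
qed

lemma edge_mult_pair_word:
  assumes a: "a \<in> arcs G" and x: "path_pair G ((u, es), (u', fs))"
  shows "pair_reducible (GE a # pair_word ((u, es), (u', fs)))"
proof (cases "head G a = u")
  case True
  let ?rest = "map GE es @ map GG (rev fs) @ [GV u']" and ?y = "((tail G a, a # es), (u', fs))"
  note comps = path_pair_components[OF x]
  have "GE a # pair_word ((u, es), (u', fs)) \<approx> GE a # ?rest"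
    by (rule word_equiv_context[OF edge_range[OF a], of "[]" ?rest])
      (use a comps in \<open>auto simp: True pair_word_eq head_tail_verts\<close>)
  also have "\<dots> \<approx> pair_word ?y"
    by (rule word_equiv_context[OF word_equiv_sym[OF source_edge[OF a]], of "[]" ?rest])
      (use a comps in \<open>auto simp: pair_word_eq head_tail_verts\<close>)
  finally have "GE a # pair_word ((u, es), (u', fs)) \<approx> pair_word ?y" .
  moreover have "path_pair G ?y"
    using x True a by (auto simp: path_pair_def is_path_Cons[OF wf] path_range_Cons head_tail_verts)
  ultimately show ?thesis
    by blast
next
  case False
  have "null_word (GE a # pair_word ((u, es), (u', fs)))"
    by (rule null_word_context[OF edge_vertex_orth[OF _ a not_sym[OF False]], of "[]" "map GE es @ map GG (rev fs) @ [GV u']"])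
      (use a path_pair_components[OF x] in \<open>auto simp: pair_word_eq\<close>)
  then show ?thesis ..
qed

lemma ghost_mult_vertex_pair_word:
  assumes a: "a \<in> arcs G" and x: "path_pair G ((u, []), (u', fs))"
  shows "pair_reducible (GG a # pair_word ((u, []), (u', fs)))"
proof (cases "tail G a = u")
  case True
  let ?rest = "map GG (rev fs) @ [GV u']" and ?y = "((head G a, []), (u', fs @ [a]))"
  note comps = path_pair_components[OF x]
  have "GG a # pair_word ((u, []), (u', fs)) \<approx> GG a # ?rest"
    by (rule word_equiv_context[OF ghost_source[OF a], of "[]" ?rest])
      (use a comps in \<open>auto simp: True pair_word_eq head_tail_verts\<close>)
  also have "\<dots> \<approx> pair_word ?y"
    by (rule word_equiv_context[OF word_equiv_sym[OF range_ghost[OF a]], of "[]" ?rest])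
      (use a comps in \<open>auto simp: pair_word_eq head_tail_verts\<close>)
  finally have "GG a # pair_word ((u, []), (u', fs)) \<approx> pair_word ?y" .
  moreover have "path_pair G ?y"
    using x True a comps(1)
    by (simp add: path_pair_def is_path_append[OF wf] path_range_append is_path_Nil head_tail_verts
        is_path_Cons[OF wf] path_range_Cons)
  ultimately show ?thesis
    by blast
next
  case False
  have "null_word (GG a # pair_word ((u, []), (u', fs)))"
    by (rule null_word_context[OF ghost_vertex_orth[OF _ a not_sym[OF False]], of "[]" "map GG (rev fs) @ [GV u']"])
      (use a path_pair_components[OF x] in \<open>auto simp: pair_word_eq\<close>)
  then show ?thesis ..
qed

lemma ghost_mult_edge_pair_word:
  assumes a: "a \<in> arcs G" and x: "path_pair G ((u, e # es), (u', fs))"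
  shows "pair_reducible (GG a # pair_word ((u, e # es), (u', fs)))"
proof -
  let ?rest = "map GE es @ map GG (rev fs) @ [GV u']"
  note comps = path_pair_components[OF x]
  have e: "e \<in> arcs G" "tail G e = u"
    using x by (auto simp: path_pair_def is_path_Cons[OF wf])
  have reduce: "GG a # pair_word ((u, e # es), (u', fs)) \<approx> [GG a, GE e] @ ?rest"
    by (rule word_equiv_context[OF source_edge[OF e(1)], of "[GG a]" ?rest])
      (use a comps in \<open>auto simp: e a pair_word_eq\<close>)
  show ?thesis
  proof (cases "a = e")
    case True
    let ?y = "((head G e, es), (u', fs))"
    have "[GG a, GE e] @ ?rest \<approx> pair_word ?y"
      by (rule word_equiv_context[OF ghost_edge[OF e(1)], of "[]" ?rest])
        (use a comps in \<open>auto simp: True pair_word_eq head_tail_verts\<close>)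
    moreover have "path_pair G ?y"
      using x by (auto simp: path_pair_def is_path_Cons[OF wf] path_range_Cons)
    ultimately show ?thesis
      using reduce by (blast intro: word_equiv_trans)
  next
    case False
    have "null_word ([GG a, GE e] @ ?rest)"
      by (rule null_word_context[OF ghost_edge_orth[OF a e(1) False], of "[]" ?rest])
        (use a comps in auto)
    then show ?thesis
      using reduce null_word_equiv by blast
  qed
qed

lemma gen_mult_pair_word:
  assumes "valid_gen G g" "path_pair G x"
  shows "pair_reducible (g # pair_word x)"
proof -
  obtain u es u' fs where x: "x = ((u, es), (u', fs))"
    by (metis prod.exhaust)
  show ?thesis
  proof (cases g)
    case (GV a)
    then show ?thesis
      using assms vertex_mult_pair_word by (simp add: x)
  next
    case (GE a)
    then show ?thesis
      using assms edge_mult_pair_word by (simp add: x)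
  next
    case (GG a)
    then show ?thesis
      using assms ghost_mult_vertex_pair_word ghost_mult_edge_pair_word by (cases es) (simp_all add: x)
  qed
qed

lemma gen_equiv_pair_word:
  assumes "valid_gen G g"
  shows "\<exists>y. path_pair G y \<and> [g] \<approx> pair_word y"
proof (cases g)
  case (GV v)
  then have v: "v \<in> verts G"
    using assms by simp
  have "[g] \<approx> pair_word ((v, []), (v, []))"
    using word_equiv_sym[OF vertex_idem[OF v]] by (simp add: GV pair_word_eq)
  moreover have "path_pair G ((v, []), (v, []))"
    using v by (simp add: path_pair_def is_path_Nil)
  ultimately show ?thesis
    by blast
next
  case (GE e)
  then have e: "e \<in> arcs G"
    using assms by simp
  have "[g] \<approx> [GV (tail G e), GE e]"
    using word_equiv_sym[OF source_edge[OF e]] by (simp add: GE)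
  moreover have "[GV (tail G e), GE e] \<approx> pair_word ((tail G e, [e]), (head G e, []))"
    by (rule word_equiv_context[OF word_equiv_sym[OF edge_range[OF e]], of "[GV (tail G e)]" "[]"])
      (auto simp: pair_word_eq e head_tail_verts)
  moreover have "path_pair G ((tail G e, [e]), (head G e, []))"
    using e by (simp add: path_pair_def is_path_Nil is_path_Cons[OF wf] head_tail_verts path_range_Cons)
  ultimately show ?thesis
    by (metis word_equiv_trans)
next
  case (GG e)
  then have e: "e \<in> arcs G"
    using assms by simp
  have "[g] \<approx> [GV (head G e), GG e]"
    using word_equiv_sym[OF range_ghost[OF e]] by (simp add: GG)
  moreover have "[GV (head G e), GG e] \<approx> pair_word ((head G e, []), (tail G e, [e]))"
    by (rule word_equiv_context[OF word_equiv_sym[OF ghost_source[OF e]], of "[GV (head G e)]" "[]"])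
      (auto simp: pair_word_eq e head_tail_verts)
  moreover have "path_pair G ((head G e, []), (tail G e, [e]))"
    using e by (simp add: path_pair_def is_path_Nil is_path_Cons[OF wf] head_tail_verts path_range_Cons)
  ultimately show ?thesis
    by (metis word_equiv_trans)
qed

theorem word_normal_form: "w \<noteq> [] \<Longrightarrow> valid_word G w \<Longrightarrow> pair_reducible w"
proof (induction w)
  case Nil
  then show ?case by simp
next
  case (Cons g w)
  show ?case
  proof (cases "w = []")
    case True
    then show ?thesis
      using gen_equiv_pair_word Cons by auto
  next
    case False
    then have "pair_reducible w"
      using Cons by auto
    then show ?thesis
    proof
      assume "null_word w"
      then have "null_word (g # w)"
        by (rule null_word_context[of w "[g]" "[]"]) (use False Cons in auto)
      then show ?thesis ..
    next
      assume "\<exists>x. path_pair G x \<and> w \<approx> pair_word x"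
      then obtain x where x: "path_pair G x" "w \<approx> pair_word x"
        by blast
      have "g # w \<approx> g # pair_word x"
        by (rule word_equiv_context[OF x(2), of "[g]" "[]"])
          (use False Cons x in \<open>auto simp: pair_word_not_Nil valid_word_pair_word\<close>)
      then show ?thesis
        using gen_mult_pair_word[of g x] Cons x by (metis word_equiv_trans null_word_equiv valid_word_simps(2))
    qed
  qed
qed

lemma path_word_append:
  assumes "is_path G (u, es @ cs)"
  shows "path_word (u, es) @ path_word (path_range G (u, es), cs) \<approx> path_word (u, es @ cs)"
proof -
  have p: "is_path G (u, es)" "is_path G (path_range G (u, es), cs)"
    using assms by (auto simp: is_path_append[OF wf])
  have u: "u \<in> verts G" and es: "set es \<subseteq> arcs G" and cs: "set cs \<subseteq> arcs G"
    using p is_path_verts is_path_arcs by force+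
  show ?thesis
  proof (cases es rule: rev_exhaust)
    case Nil
    show ?thesis
      by (rule word_equiv_context[OF vertex_idem[OF u], of "[]" "map GE cs"]) (use cs u in \<open>auto simp: Nil path_word_def\<close>)
  next
    case (snoc es0 e)
    have e: "e \<in> arcs G"
      using es snoc by auto
    show ?thesis
      by (rule word_equiv_context[OF edge_range[OF e], of "GV u # map GE es0" "map GE cs"])
        (use cs u es e head_tail_verts[OF e] in \<open>auto simp: snoc path_range_def path_word_def\<close>)
  qed
qed

lemma cross_word_prefix:
  "is_path G (v, fs) \<Longrightarrow> is_path G (v, fs @ cs) \<Longrightarrow>
    cross_word v fs (fs @ cs) \<approx> path_word (path_range G (v, fs), cs)"
proof (induction fs arbitrary: v)
  case Nil
  then show ?case by (simp add: cross_word_def path_word_def)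
next
  case (Cons f fs)
  have f: "f \<in> arcs G" "tail G f = v" "is_path G (head G f, fs)" "is_path G (head G f, fs @ cs)"
    and v: "v \<in> verts G"
    using Cons.prems by (auto simp: is_path_Cons[OF wf])
  have arcs: "set fs \<subseteq> arcs G" "set cs \<subseteq> arcs G"
    using f(4) is_path_arcs by fastforce+
  have "cross_word v (f # fs) ((f # fs) @ cs) \<approx> map GG (rev fs) @ [GG f, GE f] @ map GE (fs @ cs)"
    by (rule word_equiv_context[OF source_edge[OF f(1)], of "map GG (rev fs) @ [GG f]" "map GE (fs @ cs)"])
      (use f v arcs in \<open>auto simp: cross_word_def\<close>)
  also have "\<dots> \<approx> cross_word (head G f) fs (fs @ cs)"
    by (rule word_equiv_context[OF ghost_edge[OF f(1)], of "map GG (rev fs)" "map GE (fs @ cs)"])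
      (use f arcs in \<open>auto simp: cross_word_def head_tail_verts\<close>)
  also have "\<dots> \<approx> path_word (path_range G (v, f # fs), cs)"
    using Cons.IH[OF f(3,4)] by (simp add: path_range_Cons)
  finally show ?case .
qed

lemma cross_word_incomparable:
  "is_path G (v, fs) \<Longrightarrow> is_path G (v, fs') \<Longrightarrow> \<forall>cs. fs' \<noteq> fs @ cs \<Longrightarrow> \<forall>cs. fs \<noteq> fs' @ cs \<Longrightarrow>
    null_word (cross_word v fs fs')"
proof (induction fs arbitrary: v fs')
  case Nil
  then show ?case by simp
next
  case (Cons f fs)
  obtain f' fs0' where fs': "fs' = f' # fs0'"
    using Cons.prems(4) by (cases fs') auto
  have f: "f \<in> arcs G" "tail G f = v" "is_path G (head G f, fs)" and v: "v \<in> verts G"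
    and f': "f' \<in> arcs G" "tail G f' = v" "is_path G (head G f', fs0')"
    using Cons.prems(1,2) fs' by (auto simp: is_path_Cons[OF wf])
  have arcs: "set fs \<subseteq> arcs G" "set fs0' \<subseteq> arcs G"
    using f(3) f'(3) is_path_arcs by metis+
  have reduce: "cross_word v (f # fs) fs' \<approx> map GG (rev fs) @ [GG f, GE f'] @ map GE fs0'"
    by (rule word_equiv_context[OF source_edge[OF f'(1)], of "map GG (rev fs) @ [GG f]" "map GE fs0'"])
      (use f f' v arcs in \<open>auto simp: cross_word_def fs'\<close>)
  show ?case
  proof (cases "f = f'")
    case True
    have "map GG (rev fs) @ [GG f, GE f'] @ map GE fs0' \<approx> cross_word (head G f) fs fs0'"
      by (rule word_equiv_context[OF ghost_edge[OF f(1)], of "map GG (rev fs)" "map GE fs0'"])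
        (use f arcs in \<open>auto simp: cross_word_def True head_tail_verts\<close>)
    moreover have "null_word (cross_word (head G f) fs fs0')"
      using Cons.IH[OF f(3)] f'(3) Cons.prems(3,4) True by (simp add: fs')
    ultimately show ?thesis
      using reduce by (metis word_equiv_trans null_word_equiv)
  next
    case False
    have "null_word (map GG (rev fs) @ [GG f, GE f'] @ map GE fs0')"
      by (rule null_word_context[OF ghost_edge_orth[OF f(1) f'(1) False], of "map GG (rev fs)" "map GE fs0'"])
        (use arcs f f' in auto)
    then show ?thesis
      using reduce null_word_equiv by blast
  qed
qed

lemma lpath_eq_path_word:
  assumes "is_path G p"
  shows "(lpath G p :: ('v,'e,'k) lpa) = lcls G (mono (path_word p))"
proof -
  obtain v es where p: "p = (v, es)"
    by (metis prod.exhaust)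
  have foldr_eq: "foldr (\<lambda>e acc. lmul G (lcls G (mono [GE e])) acc) xs (lcls G (mono w))
      = lcls G (mono (map GE xs @ w) :: ('v,'e,'k) fa)"
    if "set xs \<subseteq> arcs G" "w \<noteq> []" "valid_word G w" for xs w
    using that by (induction xs) (auto simp: lmul_lcls mono_FA fmul_mono)
  show ?thesis
  proof (cases es)
    case Nil
    then show ?thesis by (simp add: p lpath_def lvert_def path_word_def)
  next
    case (Cons e es')
    obtain es1 e1 where snoc: "es = es1 @ [e1]"
      using Cons by (metis rev_exhaust list.distinct(1))
    have e: "e \<in> arcs G" "tail G e = v" and es: "set es \<subseteq> arcs G" and v: "v \<in> verts G"
      using assms p Cons by (auto simp: is_path_Cons[OF wf] is_path_def)
    have "(lpath G p :: ('v,'e,'k) lpa) = lcls G (mono (map GE es))"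
      using foldr_eq[of es1 "[GE e1]"] es by (simp add: p lpath_def snoc)
    also have "\<dots> = lcls G (mono (path_word p))"
    proof (rule lcls_eq)
      have "map GE es \<approx> path_word p"
        by (rule word_equiv_context[OF word_equiv_sym[OF source_edge[OF e(1)]], of "[]" "map GE es'"])
          (use e es v in \<open>auto simp: p path_word_def Cons\<close>)
      then show "lpa_equiv G (mono (map GE es) :: ('v,'e,'k) fa) (mono (path_word p))"
        by (simp add: mono_equiv_def)
    qed
    finally show ?thesis .
  qed
qed

end

section \<open>The forest of path pairs\<close>

text \<open>Extending \<open>(p, q)\<close> by \<open>cs\<close> gives \<open>(p cs, q cs)\<close>: in the algebra, \<open>p q\<^sup>*\<close> becomes \<open>p cs cs\<^sup>* q\<^sup>*\<close>.\<close>

definition pair_extend :: "('v,'e) ppair \<Rightarrow> 'e list \<Rightarrow> ('v,'e) ppair" where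
  "pair_extend x cs = ((fst (fst x), snd (fst x) @ cs), (fst (snd x), snd (snd x) @ cs))"

definition pair_prefix :: "('v,'e) ppair \<Rightarrow> ('v,'e) ppair \<Rightarrow> bool" where
  "pair_prefix x y \<longleftrightarrow> (\<exists>cs. y = pair_extend x cs)"

definition pair_parent :: "('v,'e) ppair \<Rightarrow> ('v,'e) ppair option" where
  "pair_parent z =
    (if snd (fst z) \<noteq> [] \<and> snd (snd z) \<noteq> [] \<and> last (snd (fst z)) = last (snd (snd z))
     then Some ((fst (fst z), butlast (snd (fst z))), (fst (snd z), butlast (snd (snd z))))
     else None)"

definition pair_max :: "('v,'e) ppair \<Rightarrow> ('v,'e) ppair \<Rightarrow> ('v,'e) ppair option" where
  "pair_max a b = (if pair_prefix a b then Some b else if pair_prefix b a then Some a else None)"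

lemma pair_extend_Nil [simp]: "pair_extend x [] = x"
  by (simp add: pair_extend_def)

lemma pair_extend_append [simp]: "pair_extend (pair_extend x a) b = pair_extend x (a @ b)"
  by (simp add: pair_extend_def)

lemma pair_prefix_refl [simp]: "pair_prefix x x"
  unfolding pair_prefix_def by (rule exI[of _ "[]"]) simp

lemma pair_prefix_trans: "pair_prefix x y \<Longrightarrow> pair_prefix y z \<Longrightarrow> pair_prefix x z"
  unfolding pair_prefix_def by auto

lemma pair_prefix_length: "pair_prefix x y \<Longrightarrow> length (snd (fst x)) \<le> length (snd (fst y))"
  by (auto simp: pair_prefix_def pair_extend_def)

lemma pair_prefix_antisym:
  assumes "pair_prefix x y" "pair_prefix y x"
  shows "x = y"
proof -
  obtain cs where y: "y = pair_extend x cs"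
    using assms(1) by (auto simp: pair_prefix_def)
  obtain cs' where "x = pair_extend y cs'"
    using assms(2) by (auto simp: pair_prefix_def)
  then have "snd (fst x) = snd (fst (pair_extend x (cs @ cs')))"
    by (simp add: y)
  then have "snd (fst x) = snd (fst x) @ cs @ cs'"
    by (simp add: pair_extend_def)
  then show ?thesis
    using y by simp
qed

lemma pair_parent_extend: "pair_parent (pair_extend w [e]) = Some w"
  by (simp add: pair_parent_def pair_extend_def)

lemma pair_parent_SomeD:
  assumes "pair_parent z = Some w"
  shows "z = pair_extend w [last (snd (fst z))]"
proof -
  obtain u es u' fs where z: "z = ((u, es), (u', fs))"
    by (metis prod.exhaust)
  then have "es \<noteq> []" "fs \<noteq> []" "last es = last fs" "w = ((u, butlast es), (u', butlast fs))"
    using assms by (auto simp: pair_parent_def split: if_splits)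
  then show ?thesis
    by (simp add: z pair_extend_def) (metis append_butlast_last_id)
qed

lemma pair_parent_prefix: "pair_parent z = Some w \<Longrightarrow> pair_prefix w z"
  by (metis pair_parent_SomeD pair_prefix_def)

lemma pair_parent_not_prefix: 
  assumes "pair_parent z = Some w"
  shows "\<not> pair_prefix z w"
proof
  assume "pair_prefix z w"
  moreover have "length (snd (fst w)) < length (snd (fst z))"
    using pair_parent_SomeD[OF assms] by (metis length_append_singleton lessI pair_extend_def prod.sel)
  ultimately show False
    using pair_prefix_length by fastforce
qed

lemma pair_prefix_cases: "pair_prefix x z \<longleftrightarrow> x = z \<or> (\<exists>w. pair_parent z = Some w \<and> pair_prefix x w)"
proof
  assume "pair_prefix x z"
  then obtain cs where z: "z = pair_extend x cs"
    by (auto simp: pair_prefix_def)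
  show "x = z \<or> (\<exists>w. pair_parent z = Some w \<and> pair_prefix x w)"
  proof (cases cs rule: rev_exhaust)
    case (snoc cs' e)
    then have "pair_parent z = Some (pair_extend x cs')"
      using z pair_parent_extend[of "pair_extend x cs'" e] by simp
    then show ?thesis
      by (auto simp: pair_prefix_def)
  qed (use z in simp)
qed (metis pair_prefix_refl pair_prefix_trans pair_parent_prefix)

lemma pair_common_prefix_cases:
  "pair_prefix a z \<and> pair_prefix b z \<longleftrightarrow>
    pair_max a b = Some z \<or> (\<exists>w. pair_parent z = Some w \<and> pair_prefix a w \<and> pair_prefix b w)"
  "\<not> (pair_max a b = Some z \<and> (\<exists>w. pair_parent z = Some w \<and> pair_prefix a w \<and> pair_prefix b w))"
proof -
  show "pair_prefix a z \<and> pair_prefix b z \<longleftrightarrow>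
    pair_max a b = Some z \<or> (\<exists>w. pair_parent z = Some w \<and> pair_prefix a w \<and> pair_prefix b w)"
  proof
    assume ab: "pair_prefix a z \<and> pair_prefix b z"
    show "pair_max a b = Some z \<or> (\<exists>w. pair_parent z = Some w \<and> pair_prefix a w \<and> pair_prefix b w)"
    proof (cases "a = z \<or> b = z")
      case True
      then show ?thesis
        using ab pair_prefix_antisym[of a b] unfolding pair_max_def by auto
    next
      case False
      then show ?thesis
        using ab pair_prefix_cases[of a z] pair_prefix_cases[of b z] by auto
    qed
  next
    assume "pair_max a b = Some z \<or> (\<exists>w. pair_parent z = Some w \<and> pair_prefix a w \<and> pair_prefix b w)"
    then show "pair_prefix a z \<and> pair_prefix b z"
      by (auto simp: pair_max_def split: if_splits intro: pair_prefix_trans pair_parent_prefix)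
  qed
  show "\<not> (pair_max a b = Some z \<and> (\<exists>w. pair_parent z = Some w \<and> pair_prefix a w \<and> pair_prefix b w))"
    by (auto simp: pair_max_def split: if_splits dest: pair_parent_not_prefix)
qed

lemma finite_pair_prefixes: "finite {z. pair_prefix z y}"
proof -
  obtain u es u' fs where y: "y = ((u, es), (u', fs))"
    by (metis prod.exhaust)
  have "{z. pair_prefix z y} \<subseteq>
      (\<lambda>(k, l). ((u, take k es), (u', take l fs))) ` ({..length es} \<times> {..length fs})"
  proof
    fix z assume "z \<in> {z. pair_prefix z y}"
    then obtain cs where "y = pair_extend z cs"
      by (auto simp: pair_prefix_def)
    then obtain a b where "z = ((u, a), (u', b))" "es = a @ cs" "fs = b @ cs"
      using y by (cases z) (auto simp: pair_extend_def)
    then show "z \<in> (\<lambda>(k, l). ((u, take k es), (u', take l fs))) ` ({..length es} \<times> {..length fs})"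
      by (auto intro!: image_eqI[of _ _ "(length a, length b)"])
  qed
  then show ?thesis
    by (rule finite_subset) auto
qed

lemma path_pair_prefix:
  assumes wf: "wf_digraph G" and "pair_prefix z y" "path_pair G y"
  shows "path_pair G z"
proof -
  obtain cs where y: "y = pair_extend z cs"
    using assms by (auto simp: pair_prefix_def)
  obtain u es u' fs where z: "z = ((u, es), (u', fs))"
    by (metis prod.exhaust)
  have h: "is_path G (u, es @ cs)" "is_path G (u', fs @ cs)"
    "path_range G (u, es @ cs) = path_range G (u', fs @ cs)"
    using assms(3) y z by (auto simp: path_pair_def pair_extend_def)
  then have p: "is_path G (u, es)" "is_path G (path_range G (u, es), cs)"
    "is_path G (u', fs)" "is_path G (path_range G (u', fs), cs)"
    by (auto simp: is_path_append[OF wf])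
  have "path_range G (u, es) = path_range G (u', fs)"
  proof (cases cs)
    case Nil
    then show ?thesis using h by simp
  next
    case (Cons c cs')
    then show ?thesis using p(2,4) by (auto simp: is_path_def)
  qed
  then show ?thesis
    using p z by (simp add: path_pair_def)
qed

lemma path_pair_extend:
  assumes wf: "wf_digraph G" and x: "path_pair G x" and q: "is_path G (snd (pair_extend x cs))"
  shows "path_pair G (pair_extend x cs)"
proof -
  obtain u es u' fs where xe: "x = ((u, es), (u', fs))"
    by (metis prod.exhaust)
  have "is_path G (path_range G (u', fs), cs)"
    using q by (simp add: xe pair_extend_def is_path_append[OF wf])
  then show ?thesis
    using x q by (simp add: xe pair_extend_def path_pair_def is_path_append[OF wf] path_range_append)
qed

definition prefix_weight :: "('i \<Rightarrow> 'k::field) \<Rightarrow> ('i \<Rightarrow> ('v,'e) ppair) \<Rightarrow> 'i set \<Rightarrow> ('v,'e) ppair \<Rightarrow> 'k" where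
  "prefix_weight c \<pi> J z = (\<Sum>i\<in>J. if pair_prefix (\<pi> i) z then c i else 0)"

lemma norm_prefix_weight:
  assumes cj: "field_involution cj"
  shows "prefix_weight c \<pi> J z * cj (prefix_weight c \<pi> J z) =
    (\<Sum>i\<in>J. \<Sum>j\<in>J. if pair_prefix (\<pi> i) z \<and> pair_prefix (\<pi> j) z then c i * cj (c j) else 0)"
  unfolding prefix_weight_def field_involution_sum[OF cj] sum_product
  by (intro sum.cong refl) (auto simp: field_involution_simps[OF cj])

lemma if_eq_add_if_disjoint:
  fixes k :: "'a::comm_monoid_add"
  shows "(A \<longleftrightarrow> B \<or> C) \<Longrightarrow> \<not> (B \<and> C) \<Longrightarrow>
    (if A then k else 0) = (if B then k else 0) + (if C then k else 0)"
  by auto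

lemma norm_prefix_weight_parent_diff:
  fixes c :: "'i \<Rightarrow> 'k::field" and \<pi> :: "'i \<Rightarrow> ('v,'e) ppair" and J :: "'i set"
  assumes cj: "field_involution cj"
  defines "N \<equiv> \<lambda>z. prefix_weight c \<pi> J z * cj (prefix_weight c \<pi> J z)"
  shows "N z - (case pair_parent z of None \<Rightarrow> 0 | Some w \<Rightarrow> N w) =
    (\<Sum>i\<in>J. \<Sum>j\<in>J. if pair_max (\<pi> i) (\<pi> j) = Some z then c i * cj (c j) else 0)"
proof -
  let ?below_parent = "\<lambda>i j. \<exists>w. pair_parent z = Some w \<and> pair_prefix (\<pi> i) w \<and> pair_prefix (\<pi> j) w"
  have parent: "(case pair_parent z of None \<Rightarrow> 0 | Some w \<Rightarrow> N w) =
      (\<Sum>i\<in>J. \<Sum>j\<in>J. if ?below_parent i j then c i * cj (c j) else 0)"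
    by (cases "pair_parent z") (simp_all add: N_def norm_prefix_weight[OF cj])
  have "N z = (\<Sum>i\<in>J. \<Sum>j\<in>J. (if pair_max (\<pi> i) (\<pi> j) = Some z then c i * cj (c j) else 0)
      + (if ?below_parent i j then c i * cj (c j) else 0))"
    unfolding N_def norm_prefix_weight[OF cj]
  proof (intro sum.cong refl)
    fix i j
    show "(if pair_prefix (\<pi> i) z \<and> pair_prefix (\<pi> j) z then c i * cj (c j) else 0) =
      (if pair_max (\<pi> i) (\<pi> j) = Some z then c i * cj (c j) else 0) +
      (if ?below_parent i j then c i * cj (c j) else 0)"
      by (rule if_eq_add_if_disjoint[OF pair_common_prefix_cases])
  qed
  then show ?thesis
    unfolding parent by (simp add: sum.distrib)
qed

lemma sum_sum_regroup_option:
  assumes ia: "involutive_algebra cj sm st" and "finite D"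
    and m: "\<And>i j z. i \<in> J \<Longrightarrow> j \<in> J \<Longrightarrow> m i j = Some z \<Longrightarrow> z \<in> D"
  shows "(\<Sum>i\<in>J. \<Sum>j\<in>J. sm (k i j) (case m i j of None \<Rightarrow> 0 | Some z \<Rightarrow> T z)) =
    (\<Sum>z\<in>D. sm (\<Sum>i\<in>J. \<Sum>j\<in>J. if m i j = Some z then k i j else 0) (T z))"
proof -
  have "(\<Sum>z\<in>D. sm (\<Sum>i\<in>J. \<Sum>j\<in>J. if m i j = Some z then k i j else 0) (T z)) =
      (\<Sum>z\<in>D. \<Sum>i\<in>J. \<Sum>j\<in>J. if m i j = Some z then sm (k i j) (T z) else 0)"
    unfolding sm_sum_left[OF ia] by (intro sum.cong refl) (auto simp: involutive_algebra_sm(1)[OF ia])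
  also have "\<dots> = (\<Sum>i\<in>J. \<Sum>j\<in>J. \<Sum>z\<in>D. if m i j = Some z then sm (k i j) (T z) else 0)"
    by (subst sum.swap) (subst (2) sum.swap, rule refl)
  also have "\<dots> = (\<Sum>i\<in>J. \<Sum>j\<in>J. sm (k i j) (case m i j of None \<Rightarrow> 0 | Some z \<Rightarrow> T z))"
    using assms(2) m by (intro sum.cong refl) (auto simp: involutive_algebra_sm(2)[OF ia] split: option.split)
  finally show ?thesis
    by simp
qed

lemma pair_parent_fibre:
  "{z \<in> D \<inter> dom pair_parent. the (pair_parent z) = w} =
    (\<lambda>e. pair_extend w [e]) ` {e. pair_extend w [e] \<in> D}"
proof
  show "{z \<in> D \<inter> dom pair_parent. the (pair_parent z) = w} \<subseteq> (\<lambda>e. pair_extend w [e]) ` {e. pair_extend w [e] \<in> D}"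
  proof
    fix z assume z: "z \<in> {z \<in> D \<inter> dom pair_parent. the (pair_parent z) = w}"
    then have "pair_parent z = Some w"
      by auto
    then show "z \<in> (\<lambda>e. pair_extend w [e]) ` {e. pair_extend w [e] \<in> D}"
      using z pair_parent_SomeD[of z w] by (intro image_eqI[of _ _ "last (snd (fst z))"]) simp_all
  qed
  show "(\<lambda>e. pair_extend w [e]) ` {e. pair_extend w [e] \<in> D} \<subseteq> {z \<in> D \<inter> dom pair_parent. the (pair_parent z) = w}"
  proof
    fix z assume "z \<in> (\<lambda>e. pair_extend w [e]) ` {e. pair_extend w [e] \<in> D}"
    then obtain e where z: "z = pair_extend w [e]" "pair_extend w [e] \<in> D"
      by blast
    then have "pair_parent z = Some w"
      by (simp add: pair_parent_extend)
    moreover have "z \<in> D"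
      using z by simp
    ultimately show "z \<in> {z \<in> D \<inter> dom pair_parent. the (pair_parent z) = w}"
      by (simp add: domI)
  qed
qed

lemma sum_regroup_parent:
  assumes ia: "involutive_algebra cj sm st" and finD: "finite D"
    and closed: "\<And>z w. z \<in> D \<Longrightarrow> pair_parent z = Some w \<Longrightarrow> w \<in> D"
  shows "(\<Sum>z\<in>D. sm (case pair_parent z of None \<Rightarrow> 0 | Some w \<Rightarrow> B w) (T z)) =
    (\<Sum>w\<in>D. sm (B w) (\<Sum>e\<in>{e. pair_extend w [e] \<in> D}. T (pair_extend w [e])))"
proof -
  have inj: "inj (\<lambda>e. pair_extend w [e])" for w :: "('v,'e) ppair"
    by (rule injI) (simp add: pair_extend_def)
  have "(\<Sum>z\<in>D. sm (case pair_parent z of None \<Rightarrow> 0 | Some w \<Rightarrow> B w) (T z)) =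
      (\<Sum>z\<in>D \<inter> dom pair_parent. sm (B (the (pair_parent z))) (T z))"
    by (rule sum.mono_neutral_cong_right)
      (use finD in \<open>auto simp: involutive_algebra_sm(1)[OF ia] split: option.splits\<close>)
  also have "\<dots> = (\<Sum>w\<in>D. \<Sum>z\<in>{z \<in> D \<inter> dom pair_parent. the (pair_parent z) = w}. sm (B (the (pair_parent z))) (T z))"
    by (rule sum.group[symmetric]) (use finD closed in auto)
  also have "\<dots> = (\<Sum>w\<in>D. sm (B w) (\<Sum>e\<in>{e. pair_extend w [e] \<in> D}. T (pair_extend w [e])))"
    unfolding pair_parent_fibre
    by (intro sum.cong refl, subst sum.reindex)
      (auto intro: inj_on_subset[OF inj] simp: pair_parent_extend sm_sum_right[OF ia])
  finally show ?thesis .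
qed

section \<open>The projections \<open>v - \<Sum>\<^sub>e\<^sub>\<in>\<^sub>I e e\<^sup>*\<close>\<close>

context lpa_graph
begin

lemma edge_ghost_sum_FA: "finite I \<Longrightarrow> I \<subseteq> arcs G \<Longrightarrow> edge_ghost_sum I \<in> FA G"
  unfolding edge_ghost_sum_def by (rule flincomb_FA) (auto intro!: mono_FA)

lemma vertex_mult_edge_ghost_sum:
  assumes I: "finite I" "I \<subseteq> out_arcs G v"
  shows "lpa_equiv G (fmul (mono [GV v]) (edge_ghost_sum I)) (edge_ghost_sum I :: ('v,'e,'k) fa)"
    and "lpa_equiv G (fmul (edge_ghost_sum I) (mono [GV v])) (edge_ghost_sum I :: ('v,'e,'k) fa)"
proof -
  have e: "e \<in> arcs G" "tail G e = v" "v \<in> verts G" if "e \<in> I" for e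
  proof -
    show arc: "e \<in> arcs G" "tail G e = v"
      using I that by auto
    show "v \<in> verts G"
      using head_tail_verts(2)[OF arc(1)] arc(2) by simp
  qed
  show "lpa_equiv G (fmul (mono [GV v]) (edge_ghost_sum I)) (edge_ghost_sum I :: ('v,'e,'k) fa)"
    unfolding edge_ghost_sum_def fmul_flincomb_right fmul_mono
  proof (rule lpa_equiv_flincomb[OF I(1)])
    fix e assume "e \<in> I"
    note e = e[OF this]
    have "[GV v, GE e, GG e] \<approx> [GE e, GG e]"
      by (rule word_equiv_context[OF source_edge[OF e(1)], of "[]" "[GG e]"]) (simp_all add: e)
    then show "lpa_equiv G (mono ([GV v] @ [GE e, GG e])) (mono [GE e, GG e] :: ('v,'e,'k) fa)"
      by (simp add: mono_equiv_def)
  qed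
  show "lpa_equiv G (fmul (edge_ghost_sum I) (mono [GV v])) (edge_ghost_sum I :: ('v,'e,'k) fa)"
    unfolding edge_ghost_sum_def fmul_flincomb_left fmul_mono
  proof (rule lpa_equiv_flincomb[OF I(1)])
    fix e assume "e \<in> I"
    note e = e[OF this]
    have "[GE e, GG e, GV v] \<approx> [GE e, GG e]"
      by (rule word_equiv_context[OF ghost_source[OF e(1)], of "[GE e]" "[]"]) (simp_all add: e)
    then show "lpa_equiv G (mono ([GE e, GG e] @ [GV v])) (mono [GE e, GG e] :: ('v,'e,'k) fa)"
      by (simp add: mono_equiv_def)
  qed
qed

lemma edge_ghost_sum_idem:
  assumes I: "finite I" "I \<subseteq> arcs G"
  shows "lpa_equiv G (fmul (edge_ghost_sum I) (edge_ghost_sum I)) (edge_ghost_sum I :: ('v,'e,'k) fa)"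
proof -
  have summand: "lpa_equiv G (mono [GE e, GG e, GE f, GG f] :: ('v,'e,'k) fa)
      (if f = e then mono [GE f, GG f] else fzero)" if "e \<in> I" "f \<in> I" for e f
  proof (cases "e = f")
    case True
    have e: "e \<in> arcs G"
      using that I by auto
    have "[GE e, GG e, GE e, GG e] \<approx> [GE e, GV (head G e), GG e]"
      by (rule word_equiv_context[OF ghost_edge[OF e], of "[GE e]" "[GG e]"])
        (use e head_tail_verts in auto)
    also have "\<dots> \<approx> [GE e, GG e]"
      by (rule word_equiv_context[OF edge_range[OF e], of "[]" "[GG e]"]) (use e head_tail_verts in auto)
    finally show ?thesis
      using True by (simp add: mono_equiv_def)
  next
    case False
    have "null_word [GE e, GG e, GE f, GG f]"
      by (rule null_word_context[OF ghost_edge_orth[OF _ _ False], of "[GE e]" "[GG f]"]) (use that I in auto)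
    then show ?thesis
      using False by (simp add: mono_null_def)
  qed
  have expand: "fmul (edge_ghost_sum I) (edge_ghost_sum I :: ('v,'e,'k) fa) =
      flincomb I (\<lambda>_. 1) (\<lambda>f. flincomb I (\<lambda>_. 1) (\<lambda>e. mono [GE e, GG e, GE f, GG f]))"
    by (simp add: edge_ghost_sum_def fmul_flincomb_left fmul_flincomb_right fmul_mono)
  have collapse: "flincomb I (\<lambda>_. 1) (\<lambda>f. flincomb I (\<lambda>_. 1) (\<lambda>e. if f = e then mono [GE f, GG f] else fzero))
      = (edge_ghost_sum I :: ('v,'e,'k) fa)"
    unfolding edge_ghost_sum_def by (rule flincomb_cong) (simp add: flincomb_delta I(1))
  have "lpa_equiv G (flincomb I (\<lambda>_. 1) (\<lambda>f. flincomb I (\<lambda>_. 1) (\<lambda>e. mono [GE e, GG e, GE f, GG f]))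
      :: ('v,'e,'k) fa)
      (flincomb I (\<lambda>_. 1) (\<lambda>f. flincomb I (\<lambda>_. 1) (\<lambda>e. if f = e then mono [GE f, GG f] else fzero)))"
    by (intro lpa_equiv_flincomb[OF I(1)] summand)
  then show ?thesis
    by (simp only: expand collapse)
qed

lemma vertex_minus_edge_ghost_sum_square:
  assumes v: "v \<in> verts G" and I: "finite I" "I \<subseteq> out_arcs G v"
  defines "y \<equiv> fsub (mono [GV v]) (edge_ghost_sum I :: ('v,'e,'k) fa)"
  shows "fstar cj y = y" and "lpa_equiv G (fmul y (fstar cj y)) y"
proof -
  let ?v = "mono [GV v] :: ('v,'e,'k) fa" and ?S = "edge_ghost_sum I :: ('v,'e,'k) fa"
  show ystar: "fstar cj y = y"
    by (simp add: y_def fstar_fsub[OF cj] fstar_mono[OF cj] fstar_edge_ghost_sum[OF cj])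
  have square: "fmul y y = fsub (fsub (fmul ?v ?v) (fmul ?S ?v)) (fsub (fmul ?v ?S) (fmul ?S ?S))"
    unfolding y_def fmul_fsub ..
  have vv: "lpa_equiv G (fmul ?v ?v) ?v"
    using vertex_idem[OF v] by (simp add: fmul_mono mono_equiv_def)
  have SS: "lpa_equiv G (fmul ?S ?S) ?S"
    using I by (intro edge_ghost_sum_idem) auto
  have "lpa_equiv G (fmul y y) (fsub (fsub ?v ?S) (fsub ?S ?S))"
    unfolding square by (intro lpa_equiv_fsub vv SS vertex_mult_edge_ghost_sum[OF I])
  moreover have "fsub (fsub ?v ?S) (fsub ?S ?S) = y"
    by (simp add: y_def fsub_def fun_eq_iff)
  ultimately show "lpa_equiv G (fmul y (fstar cj y)) y"
    unfolding ystar by simp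
qed

end

section \<open>Traces on the free algebra\<close>

definition ftrace :: "('v,'e) pre_digraph \<Rightarrow> (('v,'e,'k::field) lpa \<Rightarrow> 'r) \<Rightarrow> ('v,'e,'k) fa \<Rightarrow> 'r" where
  "ftrace G t f = t (lcls G f)"

definition pair_trace :: "('v,'e) pre_digraph \<Rightarrow> (('v,'e,'k::field) lpa \<Rightarrow> 'r) \<Rightarrow> ('v,'e) ppair \<Rightarrow> 'r" where
  "pair_trace G t z = t (lvert G (path_range G (fst z)))"

locale lpa_with_trace = lpa_graph G cj
  for G :: "('v,'e) pre_digraph" and cj :: "'k::field \<Rightarrow> 'k" +
  fixes sm :: "'k \<Rightarrow> 'r::ring \<Rightarrow> 'r" and st :: "'r \<Rightarrow> 'r" and t :: "('v,'e,'k) lpa \<Rightarrow> 'r"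
  assumes ia: "involutive_algebra cj sm st"
    and tr: "lpa_trace G t"
    and kl: "lpa_trace_K_linear G sm t"
begin

lemma ftrace_fadd: "f \<in> FA G \<Longrightarrow> g \<in> FA G \<Longrightarrow> ftrace G t (fadd f g) = ftrace G t f + ftrace G t g"
  using tr unfolding ftrace_def lpa_trace_def by (metis ladd_lcls lcls_LPA)

lemma ftrace_fsmult: "f \<in> FA G \<Longrightarrow> ftrace G t (fsmult a f) = sm a (ftrace G t f)"
  using kl unfolding ftrace_def lpa_trace_K_linear_def by (metis lsmult_lcls lcls_LPA)

lemma ftrace_fzero: "ftrace G t fzero = 0"
proof -
  have "fadd fzero fzero = (fzero :: ('v,'e,'k) fa)"
    by (simp add: fadd_def fzero_def)
  then show ?thesis
    using ftrace_fadd[OF fzero_FA fzero_FA] by simp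
qed

lemma ftrace_fsub: "f \<in> FA G \<Longrightarrow> g \<in> FA G \<Longrightarrow> ftrace G t (fsub f g) = ftrace G t f - ftrace G t g"
  by (simp add: fsub_conv_fadd ftrace_fadd ftrace_fsmult fsmult_FA involutive_algebra_sm[OF ia])

lemma ftrace_equiv: "lpa_equiv G f g \<Longrightarrow> ftrace G t f = ftrace G t g"
  by (simp add: ftrace_def lcls_eq)

lemma ftrace_fmul_commute: "f \<in> FA G \<Longrightarrow> g \<in> FA G \<Longrightarrow> ftrace G t (fmul f g) = ftrace G t (fmul g f)"
  using tr unfolding ftrace_def lpa_trace_def by (metis lmul_lcls lcls_LPA)

lemma ftrace_flincomb:
  "finite A \<Longrightarrow> (\<And>i. i \<in> A \<Longrightarrow> f i \<in> FA G) \<Longrightarrow>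
    ftrace G t (flincomb A c f) = (\<Sum>i\<in>A. sm (c i) (ftrace G t (f i)))"
  by (induction A rule: finite_induct)
    (simp_all add: ftrace_fzero flincomb_insert ftrace_fadd ftrace_fsmult fsmult_FA flincomb_FA)

lemma ftrace_word_equiv: "a \<approx> b \<Longrightarrow> ftrace G t (mono a) = ftrace G t (mono b)"
  by (simp add: mono_equiv_def ftrace_equiv)

lemma ftrace_null_word: "null_word a \<Longrightarrow> ftrace G t (mono a) = 0"
  by (simp add: mono_null_def ftrace_equiv ftrace_fzero)

lemma ftrace_vertex: "ftrace G t (mono [GV v]) = t (lvert G v)"
  by (simp add: ftrace_def lvert_def)

lemma trace_vertex_minus_ranges:
  assumes v: "v \<in> verts G" and I: "finite I" "I \<subseteq> out_arcs G v"
  shows "t (lsub G (lvert G v) (lrange_sum G I)) = t (lvert G v) - (\<Sum>e\<in>I. t (lvert G (head G e)))"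
proof -
  define L :: "('v,'e,'k) fa" where "L = flincomb I (\<lambda>_. 1) (\<lambda>e. mono [GV (head G e)])"
  have heads: "head G e \<in> verts G" if "e \<in> I" for e
    using that I head_tail_verts by auto
  have LF: "L \<in> FA G" and vF: "mono [GV v] \<in> FA G"
    unfolding L_def using heads v by (auto intro!: flincomb_FA[OF I(1)] mono_FA)
  have "lrange_sum G I = lcls G L"
    by (simp add: lrange_sum_def L_def flincomb_def)
  then have "t (lsub G (lvert G v) (lrange_sum G I)) = ftrace G t (mono [GV v]) - ftrace G t L"
    by (simp add: lvert_def lsub_lcls[OF vF LF] ftrace_fsub[OF vF LF, unfolded ftrace_def] ftrace_def)
  also have "ftrace G t L = (\<Sum>e\<in>I. t (lvert G (head G e)))"
    unfolding L_def using heads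
    by (simp add: ftrace_flincomb[OF I(1)] mono_FA ftrace_vertex involutive_algebra_sm(6)[OF ia])
  finally show ?thesis
    by (simp add: ftrace_vertex)
qed

lemma trace_edge_ghost_sum:
  assumes "finite I" "I \<subseteq> arcs G"
  shows "ftrace G t (edge_ghost_sum I) = (\<Sum>e\<in>I. t (lvert G (head G e)))"
proof -
  have "ftrace G t (mono [GE e, GG e]) = t (lvert G (head G e))" if "e \<in> I" for e
  proof -
    have e: "e \<in> arcs G"
      using that assms by auto
    have "ftrace G t (mono [GE e, GG e]) = ftrace G t (fmul (mono [GG e]) (mono [GE e]))"
      using e by (subst ftrace_fmul_commute) (auto simp: fmul_mono intro!: mono_FA)
    also have "\<dots> = t (lvert G (head G e))"
      using ftrace_word_equiv[OF ghost_edge[OF e]] by (simp add: fmul_mono ftrace_vertex)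
    finally show ?thesis .
  qed
  then show ?thesis
    using assms unfolding edge_ghost_sum_def
    by (simp add: ftrace_flincomb mono_FA subset_iff involutive_algebra_sm(6)[OF ia])
qed

theorem vertex_condition_if_positive:
  assumes pos: "lpa_trace_positive G cj st t"
    and v: "v \<in> verts G" and I: "I \<subseteq> out_arcs G v" "finite I"
  shows "ring_positive st (t (lsub G (lvert G v) (lrange_sum G I)))"
proof -
  define y :: "('v,'e,'k) fa" where "y = fsub (mono [GV v]) (edge_ghost_sum I)"
  have arcs: "I \<subseteq> arcs G"
    using I by auto
  have yF: "y \<in> FA G"
    unfolding y_def using v arcs I by (intro fsub_FA mono_FA edge_ghost_sum_FA) auto
  have "lmul G (lcls G y) (lstar G cj (lcls G y)) = lcls G y"
    using vertex_minus_edge_ghost_sum_square[OF v I(2,1)] yF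
    by (simp add: y_def lstar_lcls[OF cj] lmul_lcls fstar_FA[OF cj] lcls_eq)
  then have "is_positive (LPA G) (ladd G) (lzero G) (lmul G) (lstar G cj) (lcls G y)"
    unfolding is_positive_def lzero_def using yF ladd_lcls[OF yF fzero_FA]
    by (intro exI[of _ "[lcls G y]"]) (simp add: lcls_LPA fadd_def[of y] fzero_def)
  then have "ring_positive st (ftrace G t y)"
    using pos yF by (simp add: lpa_trace_positive_def ftrace_def lcls_LPA)
  also have "ftrace G t y = t (lsub G (lvert G v) (lrange_sum G I))"
    using yF v arcs I
    by (simp add: y_def ftrace_fsub mono_FA edge_ghost_sum_FA trace_edge_ghost_sum
        trace_vertex_minus_ranges ftrace_vertex)
  finally show ?thesis .
qed

lemma positive_if_squares_positive:
  assumes "\<And>x. x \<in> FA G \<Longrightarrow> ring_positive st (ftrace G t (fmul x (fstar cj x)))"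
  shows "lpa_trace_positive G cj st t"
  unfolding lpa_trace_positive_def
proof (intro ballI impI)
  fix X assume X: "X \<in> LPA G" "is_positive (LPA G) (ladd G) (lzero G) (lmul G) (lstar G cj) X"
  then obtain zs where zs: "set zs \<subseteq> LPA G"
    "X = foldr (\<lambda>z acc. ladd G (lmul G z (lstar G cj z)) acc) zs (lzero G)"
    by (auto simp: is_positive_def)
  have square: "lmul G z (lstar G cj z) \<in> LPA G \<and> ring_positive st (t (lmul G z (lstar G cj z)))"
    if "z \<in> LPA G" for z
    using assms[OF lrep_FA[OF that]] lmul_lstar_self[OF cj that]
    by (simp add: ftrace_def lcls_LPA fmul_FA fstar_FA[OF cj] lrep_FA[OF that])
  have "foldr (\<lambda>z acc. ladd G (lmul G z (lstar G cj z)) acc) zs (lzero G) \<in> LPA G \<and>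
      ring_positive st (t (foldr (\<lambda>z acc. ladd G (lmul G z (lstar G cj z)) acc) zs (lzero G)))"
    using zs(1)
  proof (induction zs)
    case Nil
    show ?case
      using ftrace_fzero by (simp add: ftrace_def lzero_def lcls_LPA ring_positive_0)
  next
    case (Cons z zs)
    let ?acc = "foldr (\<lambda>z acc. ladd G (lmul G z (lstar G cj z)) acc) zs (lzero G)"
    have acc: "?acc \<in> LPA G" "ring_positive st (t ?acc)"
      using Cons by auto
    have z: "lmul G z (lstar G cj z) \<in> LPA G" "ring_positive st (t (lmul G z (lstar G cj z)))"
      using square Cons.prems by auto
    have "ladd G (lmul G z (lstar G cj z)) ?acc \<in> LPA G"
      by (rule ladd_LPA[OF z(1) acc(1)])
    moreover have "t (ladd G (lmul G z (lstar G cj z)) ?acc) = t (lmul G z (lstar G cj z)) + t ?acc"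
      using tr z(1) acc(1) by (simp add: lpa_trace_def)
    ultimately show ?case
      using acc(2) z(2) ring_positive_add by simp
  qed
  then show "ring_positive st (t X)"
    using zs(2) by simp
qed

end

section \<open>Canonical traces\<close>

lemma (in lpa_graph) pair_product_reduce:
  assumes x: "path_pair G x" and y: "path_pair G y"
    and same: "fst (snd x) = fst (snd y)" and ext: "snd (snd y) = snd (snd x) @ cs"
  shows "pair_word x @ wstar (pair_word y) \<approx> path_word (fst (pair_extend x cs)) @ wstar (path_word (fst y))"
proof -
  obtain ux esx v fsx where xe: "x = ((ux, esx), (v, fsx))"
    by (metis prod.exhaust)
  obtain uy esy fsy where ye: "y = ((uy, esy), (v, fsy))" and fsy: "fsy = fsx @ cs"
    using same ext xe by (cases y) auto
  have px: "is_path G (ux, esx)" "is_path G (v, fsx)" "path_range G (ux, esx) = path_range G (v, fsx)"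
    and py: "is_path G (uy, esy)" "is_path G (v, fsx @ cs)"
    using x y by (auto simp: path_pair_def xe ye fsy)
  let ?r = "path_range G (v, fsx)"
  have pc: "is_path G (?r, cs)" and pxc: "is_path G (ux, esx @ cs)"
    using px py(2) by (auto simp: is_path_append[OF wf])
  have valid: "valid_word G (path_word (ux, esx))" "valid_word G (wstar (path_word (uy, esy)))"
    "valid_word G (path_word (?r, cs))" "valid_word G (cross_word v fsx (fsx @ cs))"
    using px py pc is_path_verts is_path_arcs
    by (fastforce simp: valid_word_path_word cross_word_def)+
  have "pair_word x @ wstar (pair_word y) =
      (path_word (ux, esx) @ map GG (rev fsx)) @ [GV v, GV v] @ (map GE (fsx @ cs) @ wstar (path_word (uy, esy)))"
    by (simp add: xe ye fsy pair_word_def path_word_def wstar_Cons)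
  also have "\<dots> \<approx> path_word (ux, esx) @ cross_word v fsx (fsx @ cs) @ wstar (path_word (uy, esy))"
    by (rule word_equiv_context[OF vertex_idem[of v], of "path_word (ux, esx) @ map GG (rev fsx)"
          "map GE (fsx @ cs) @ wstar (path_word (uy, esy))"])
      (use px valid is_path_verts in \<open>auto simp: cross_word_def\<close>)
  also have "\<dots> \<approx> path_word (ux, esx) @ path_word (?r, cs) @ wstar (path_word (uy, esy))"
    by (rule word_equiv_context[OF cross_word_prefix[OF px(2) py(2)],
          of "path_word (ux, esx)" "wstar (path_word (uy, esy))"])
      (use valid in \<open>auto simp: cross_word_def path_word_def\<close>)
  also have "\<dots> \<approx> path_word (ux, esx @ cs) @ wstar (path_word (uy, esy))"
    by (rule word_equiv_context[OF path_word_append[OF pxc], of "[]"])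
      (use valid valid_word_path_word[OF pxc] in \<open>auto simp: px(3) path_word_def\<close>)
  finally show ?thesis
    by (simp add: xe ye pair_extend_def)
qed

lemma (in lpa_graph) pair_product_null:
  assumes x: "path_pair G ((ux, esx), (ux', fsx))" and y: "path_pair G ((uy, esy), (uy', fsy))"
    and apart: "ux' \<noteq> uy' \<or> (\<forall>cs. fsy \<noteq> fsx @ cs) \<and> (\<forall>cs. fsx \<noteq> fsy @ cs)"
  shows "null_word (pair_word ((ux, esx), (ux', fsx)) @ wstar (pair_word ((uy, esy), (uy', fsy))))"
proof -
  note cx = path_pair_components[OF x] and cy = path_pair_components[OF y]
  let ?a = "path_word (ux, esx) @ map GG (rev fsx)" and ?b = "map GE fsy @ wstar (path_word (uy, esy))"
  have word: "pair_word ((ux, esx), (ux', fsx)) @ wstar (pair_word ((uy, esy), (uy', fsy))) =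
      ?a @ [GV ux', GV uy'] @ ?b"
    by (simp add: pair_word_def path_word_def wstar_Cons)
  have valid: "valid_word G ?a" "valid_word G ?b"
    using cx cy by (auto simp: path_word_def)
  show ?thesis
  proof (cases "ux' = uy'")
    case False
    show ?thesis
      by (rule null_word_context[OF vertex_orth[OF cx(2) cy(2) False] _ _ valid word]) (simp_all add: cx(2) cy(2))
  next
    case True
    have paths: "is_path G (ux', fsx)" "is_path G (ux', fsy)"
      using x y True by (simp_all add: path_pair_def)
    have "null_word (path_word (ux, esx) @ cross_word ux' fsx fsy @ wstar (path_word (uy, esy)))"
      by (rule null_word_context[OF cross_word_incomparable[of ux' fsx fsy],
            of "path_word (ux, esx)" "wstar (path_word (uy, esy))"])
        (use paths apart True cx cy in \<open>auto simp: cross_word_def path_word_def\<close>)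
    moreover have "?a @ [GV ux', GV uy'] @ ?b \<approx>
        path_word (ux, esx) @ cross_word ux' fsx fsy @ wstar (path_word (uy, esy))"
      by (rule word_equiv_context[OF vertex_idem[OF cx(2)] _ _ _ _ valid]) (simp_all add: True cross_word_def cx(2) cy(2))
    ultimately show ?thesis
      unfolding word by (rule null_word_equiv[rotated])
  qed
qed

locale lpa_with_canonical_trace = lpa_with_trace G cj sm st t
  for G :: "('v,'e) pre_digraph" and cj :: "'k::field \<Rightarrow> 'k"
    and sm :: "'k \<Rightarrow> 'r::ring \<Rightarrow> 'r" and st :: "'r \<Rightarrow> 'r" and t :: "('v,'e,'k) lpa \<Rightarrow> 'r" +
  assumes canonical: "lpa_trace_canonical G cj t"
begin

lemma ftrace_path_product:
  assumes "is_path G p" "is_path G q" "path_range G p = path_range G q"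
  shows "ftrace G t (mono (path_word p @ wstar (path_word q))) =
    (if p = q then t (lvert G (path_range G p)) else 0)"
proof -
  have valid: "valid_word G (path_word p)" "valid_word G (path_word q)"
    using assms(1,2) by (simp_all add: valid_word_path_word)
  have "lmul G (lpath G p) (lstar G cj (lpath G q)) = lcls G (mono (path_word p @ wstar (path_word q)))"
    using valid by (simp add: lpath_eq_path_word assms lstar_lcls cj mono_FA path_word_def
        fstar_mono lmul_lcls fmul_mono)
  then show ?thesis
    using canonical assms unfolding lpa_trace_canonical_def ftrace_def by metis
qed

lemma ftrace_pair_product_prefix:
  assumes "path_pair G x" "path_pair G y" "fst (snd x) = fst (snd y)" "snd (snd y) = snd (snd x) @ cs"
  shows "ftrace G t (mono (pair_word x @ wstar (pair_word y))) =
    (if pair_extend x cs = y then pair_trace G t y else 0)"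
proof -
  have snd_eq: "snd (pair_extend x cs) = snd y"
    using assms(3,4) by (simp add: pair_extend_def prod_eq_iff)
  have ext: "path_pair G (pair_extend x cs)"
    using assms(2) by (intro path_pair_extend[OF wf assms(1)]) (simp add: snd_eq path_pair_def)
  have "ftrace G t (mono (pair_word x @ wstar (pair_word y))) =
      ftrace G t (mono (path_word (fst (pair_extend x cs)) @ wstar (path_word (fst y))))"
    by (rule ftrace_word_equiv[OF pair_product_reduce[OF assms]])
  also have "\<dots> = (if fst (pair_extend x cs) = fst y then t (lvert G (path_range G (fst y))) else 0)"
    using ext assms(2) snd_eq by (subst ftrace_path_product) (auto simp: path_pair_def)
  finally show ?thesis
    using snd_eq by (auto simp: pair_trace_def prod_eq_iff)
qed

theorem ftrace_pair_product:
  assumes x: "path_pair G x" and y: "path_pair G y"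
  shows "ftrace G t (mono (pair_word x @ wstar (pair_word y))) =
    (case pair_max x y of None \<Rightarrow> 0 | Some z \<Rightarrow> pair_trace G t z)"
proof -
  obtain ux esx ux' fsx uy esy uy' fsy where xe: "x = ((ux, esx), (ux', fsx))" and ye: "y = ((uy, esy), (uy', fsy))"
    by (metis prod.exhaust)
  consider (xy) cs where "ux' = uy'" "fsy = fsx @ cs"
    | (yx) cs where "ux' = uy'" "fsx = fsy @ cs"
    | (null) "ux' \<noteq> uy' \<or> (\<forall>cs. fsy \<noteq> fsx @ cs) \<and> (\<forall>cs. fsx \<noteq> fsy @ cs)"
    by blast
  then show ?thesis
  proof cases
    case (xy cs)
    then show ?thesis
      using ftrace_pair_product_prefix[OF x y, of cs] pair_prefix_antisym[of x y]
      by (auto simp: xe ye pair_max_def pair_prefix_def pair_extend_def)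
  next
    case (yx cs)
    have "wstar (pair_word y @ wstar (pair_word x)) \<approx>
        wstar (path_word (fst (pair_extend y cs)) @ wstar (path_word (fst x)))"
      by (rule word_equiv_wstar[OF pair_product_reduce[OF y x]]) (use yx in \<open>simp_all add: xe ye\<close>)
    then have "ftrace G t (mono (pair_word x @ wstar (pair_word y))) =
        ftrace G t (mono (path_word (fst x) @ wstar (path_word (fst (pair_extend y cs)))))"
      by (simp add: ftrace_word_equiv)
    also have "\<dots> = (if fst x = fst (pair_extend y cs) then pair_trace G t x else 0)"
      using x y yx by (subst ftrace_path_product)
        (auto simp: xe ye path_pair_def pair_extend_def pair_trace_def is_path_append[OF wf] path_range_append)
    finally show ?thesis
      using yx pair_prefix_antisym[of x y]
      by (auto simp: xe ye pair_max_def pair_prefix_def pair_extend_def)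
  next
    case null
    then have "null_word (pair_word x @ wstar (pair_word y))"
      using pair_product_null x y by (simp add: xe ye)
    then show ?thesis
      using null by (auto simp: ftrace_null_word pair_max_def pair_prefix_def pair_extend_def xe ye)
  qed
qed

lemma free_element_normal_form:
  fixes x :: "('v,'e,'k) fa"
  assumes x: "x \<in> FA G"
  obtains J \<pi> where "finite J" "\<And>i. i \<in> J \<Longrightarrow> path_pair G (\<pi> i)"
    "lpa_equiv G x (flincomb J x (\<lambda>w. mono (pair_word (\<pi> w))))"
proof -
  define S where "S = {w. x w \<noteq> 0}"
  have finS: "finite S" and S: "\<And>w. w \<in> S \<Longrightarrow> w \<noteq> [] \<and> valid_word G w"
    using FA_D[OF x] by (auto simp: S_def)
  define J where "J = {w \<in> S. \<not> null_word w}"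
  define \<pi> where "\<pi> w = (SOME y. path_pair G y \<and> w \<approx> pair_word y)" for w
  have \<pi>: "path_pair G (\<pi> w) \<and> w \<approx> pair_word (\<pi> w)" if "w \<in> J" for w
  proof -
    have "\<exists>y. path_pair G y \<and> w \<approx> pair_word y"
      using word_normal_form[of w] S[of w] that unfolding J_def by blast
    then show ?thesis
      unfolding \<pi>_def by (rule someI_ex)
  qed
  define g :: "('v,'e) gen list \<Rightarrow> ('v,'e,'k) fa"
    where "g w = (if null_word w then fzero else mono (pair_word (\<pi> w)))" for w
  have "lpa_equiv G (flincomb S x mono) (flincomb S x g)"
    using \<pi> by (intro lpa_equiv_flincomb finS) (auto simp: g_def J_def mono_null_def mono_equiv_def)
  moreover have "flincomb S x g = flincomb J x (\<lambda>w. mono (pair_word (\<pi> w)))"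
    unfolding flincomb_def fun_eq_iff
    by (intro allI sum.mono_neutral_cong_right finS) (auto simp: J_def g_def fzero_def)
  moreover have "x = flincomb S x mono"
    unfolding S_def by (rule FA_eq_flincomb_mono[OF x])
  ultimately show ?thesis
    using that[of J \<pi>] \<pi> finS by (simp add: J_def)
qed

lemma ftrace_square_pair_words:
  fixes c
  assumes J: "finite J" and \<pi>: "\<And>i. i \<in> J \<Longrightarrow> path_pair G (\<pi> i)"
  defines "y \<equiv> flincomb J c (\<lambda>i. mono (pair_word (\<pi> i)))"
  shows "ftrace G t (fmul y (fstar cj y)) = (\<Sum>i\<in>J. \<Sum>j\<in>J. sm (c i * cj (c j))
      (case pair_max (\<pi> i) (\<pi> j) of None \<Rightarrow> 0 | Some z \<Rightarrow> pair_trace G t z))"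
proof -
  let ?m = "\<lambda>i j. mono (pair_word (\<pi> i) @ wstar (pair_word (\<pi> j)))"
  have F: "?m i j \<in> FA G" if "i \<in> J" "j \<in> J" for i j
    using that \<pi> by (auto intro!: mono_FA simp: pair_word_not_Nil valid_word_pair_word)
  have "fstar cj y = flincomb J (\<lambda>j. cj (c j)) (\<lambda>j. mono (wstar (pair_word (\<pi> j))))"
    by (simp add: y_def fstar_flincomb[OF cj] fstar_mono[OF cj])
  then have expand: "fmul y (fstar cj y) = flincomb J c (\<lambda>i. flincomb J (\<lambda>j. cj (c j)) (?m i))"
    unfolding y_def fmul_flincomb_left by (simp add: fmul_flincomb_right fmul_mono)
  have "ftrace G t (fmul y (fstar cj y)) = (\<Sum>i\<in>J. sm (c i) (ftrace G t (flincomb J (\<lambda>j. cj (c j)) (?m i))))"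
    unfolding expand by (intro ftrace_flincomb[OF J] flincomb_FA[OF J] F)
  also have "\<dots> = (\<Sum>i\<in>J. \<Sum>j\<in>J. sm (c i * cj (c j))
      (case pair_max (\<pi> i) (\<pi> j) of None \<Rightarrow> 0 | Some z \<Rightarrow> pair_trace G t z))"
  proof (intro sum.cong refl)
    fix i assume i: "i \<in> J"
    have "ftrace G t (flincomb J (\<lambda>j. cj (c j)) (?m i)) = (\<Sum>j\<in>J. sm (cj (c j)) (ftrace G t (?m i j)))"
      by (intro ftrace_flincomb[OF J] F i)
    also have "\<dots> = (\<Sum>j\<in>J. sm (cj (c j)) (case pair_max (\<pi> i) (\<pi> j) of None \<Rightarrow> 0 | Some z \<Rightarrow> pair_trace G t z))"
      using \<pi> i by (intro sum.cong refl) (simp add: ftrace_pair_product)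
    finally show "sm (c i) (ftrace G t (flincomb J (\<lambda>j. cj (c j)) (?m i))) = (\<Sum>j\<in>J. sm (c i * cj (c j))
        (case pair_max (\<pi> i) (\<pi> j) of None \<Rightarrow> 0 | Some z \<Rightarrow> pair_trace G t z))"
      by (simp add: sm_sum_right[OF ia] involutive_algebra_sm(5)[OF ia])
  qed
  finally show ?thesis .
qed

lemma pair_trace_minus_children_positive:
  assumes P: "\<forall>v\<in>verts G. \<forall>I. I \<subseteq> out_arcs G v \<longrightarrow> finite I \<longrightarrow>
      ring_positive st (t (lsub G (lvert G v) (lrange_sum G I)))"
    and w: "path_pair G w" and I: "finite I" "\<And>e. e \<in> I \<Longrightarrow> path_pair G (pair_extend w [e])"
  shows "ring_positive st (pair_trace G t w - (\<Sum>e\<in>I. pair_trace G t (pair_extend w [e])))"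
proof -
  obtain u es where fst_w: "fst w = (u, es)"
    by (cases "fst w")
  define r where "r = path_range G (u, es)"
  have "is_path G (u, es)"
    using w by (simp add: path_pair_def fst_w)
  then have r: "r \<in> verts G"
    unfolding r_def by (rule path_range_verts[OF wf])
  have out: "I \<subseteq> out_arcs G r"
  proof
    fix e assume "e \<in> I"
    then have "is_path G (u, es @ [e])"
      using I(2) by (auto simp: path_pair_def pair_extend_def fst_w)
    then show "e \<in> out_arcs G r"
      by (simp add: is_path_append[OF wf] is_path_Cons[OF wf] r_def)
  qed
  have "pair_trace G t (pair_extend w [e]) = t (lvert G (head G e))" for e
    by (simp add: pair_trace_def pair_extend_def fst_w path_range_def)
  then show ?thesis
    using P r out I(1) by (simp add: pair_trace_def fst_w r_def[symmetric] trace_vertex_minus_ranges)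
qed

theorem pair_max_sum_positive:
  assumes P: "\<forall>v\<in>verts G. \<forall>I. I \<subseteq> out_arcs G v \<longrightarrow> finite I \<longrightarrow>
      ring_positive st (t (lsub G (lvert G v) (lrange_sum G I)))"
    and J: "finite J" and \<pi>: "\<And>i. i \<in> J \<Longrightarrow> path_pair G (\<pi> i)"
  shows "ring_positive st (\<Sum>i\<in>J. \<Sum>j\<in>J. sm (c i * cj (c j))
      (case pair_max (\<pi> i) (\<pi> j) of None \<Rightarrow> 0 | Some z \<Rightarrow> pair_trace G t z))"
proof -
  define D where "D = {z. path_pair G z \<and> (\<exists>i\<in>J. pair_prefix z (\<pi> i))}"
  define N where "N z = prefix_weight c \<pi> J z * cj (prefix_weight c \<pi> J z)" for z
  define T where "T = pair_trace G t"
  define children where "children w = {e. pair_extend w [e] \<in> D}" for w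
  have finD: "finite D"
    by (rule finite_subset[of _ "\<Union>i\<in>J. {z. pair_prefix z (\<pi> i)}"])
      (auto simp: D_def intro!: finite_UN_I J finite_pair_prefixes)
  have closed: "w \<in> D" if "z \<in> D" "pair_parent z = Some w" for z w
    using that pair_parent_prefix[OF that(2)] path_pair_prefix[OF wf] pair_prefix_trans
    unfolding D_def by blast
  have \<pi>D: "\<pi> i \<in> D" if "i \<in> J" for i
    using that \<pi> by (auto simp: D_def intro!: bexI[of _ i])
  have max_in_D: "z \<in> D" if "i \<in> J" "j \<in> J" "pair_max (\<pi> i) (\<pi> j) = Some z" for i j z
    using that \<pi>D by (auto simp: pair_max_def split: if_splits)
  have "(\<Sum>i\<in>J. \<Sum>j\<in>J. sm (c i * cj (c j)) (case pair_max (\<pi> i) (\<pi> j) of None \<Rightarrow> 0 | Some z \<Rightarrow> T z))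
      = (\<Sum>z\<in>D. sm (\<Sum>i\<in>J. \<Sum>j\<in>J. if pair_max (\<pi> i) (\<pi> j) = Some z then c i * cj (c j) else 0) (T z))"
    by (rule sum_sum_regroup_option[OF ia finD max_in_D])
  also have "\<dots> = (\<Sum>z\<in>D. sm (N z - (case pair_parent z of None \<Rightarrow> 0 | Some w \<Rightarrow> N w)) (T z))"
    by (intro sum.cong refl) (simp only: N_def norm_prefix_weight_parent_diff[OF cj])
  also have "\<dots> = (\<Sum>w\<in>D. sm (N w) (T w - (\<Sum>e\<in>children w. T (pair_extend w [e]))))"
    by (simp add: sum_subtractf involutive_algebra_sm(7,8)[OF ia] children_def
        sum_regroup_parent[OF ia finD closed])
  finally have sum_eq: "(\<Sum>i\<in>J. \<Sum>j\<in>J. sm (c i * cj (c j)) (case pair_max (\<pi> i) (\<pi> j) of None \<Rightarrow> 0 | Some z \<Rightarrow> T z))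
      = (\<Sum>w\<in>D. sm (N w) (T w - (\<Sum>e\<in>children w. T (pair_extend w [e]))))" .
  have node: "ring_positive st (T w - (\<Sum>e\<in>children w. T (pair_extend w [e])))" if "w \<in> D" for w
  proof (rule pair_trace_minus_children_positive[OF P, folded T_def])
    show "path_pair G w"
      using that by (simp add: D_def)
    show "finite (children w)"
      using finite_vimageI[OF finD, of "\<lambda>e. pair_extend w [e]"]
      by (simp add: children_def vimage_def inj_def pair_extend_def)
    show "path_pair G (pair_extend w [e])" if "e \<in> children w" for e
      using that by (simp add: children_def D_def)
  qed
  then show ?thesis
    unfolding sum_eq T_def[symmetric] by (intro ring_positive_sum) (simp add: N_def ring_positive_sm_norm[OF ia] node)
qed

theorem positive_if_vertex_condition:
  assumes P: "\<forall>v\<in>verts G. \<forall>I. I \<subseteq> out_arcs G v \<longrightarrow> finite I \<longrightarrow>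
      ring_positive st (t (lsub G (lvert G v) (lrange_sum G I)))"
  shows "lpa_trace_positive G cj st t"
proof (rule positive_if_squares_positive)
  fix x :: "('v,'e,'k) fa"
  assume x: "x \<in> FA G"
  obtain J \<pi> where J: "finite J" and \<pi>: "\<And>i. i \<in> J \<Longrightarrow> path_pair G (\<pi> i)"
    and equiv: "lpa_equiv G x (flincomb J x (\<lambda>w. mono (pair_word (\<pi> w))))"
    using free_element_normal_form[OF x] by blast
  let ?y = "flincomb J x (\<lambda>w. mono (pair_word (\<pi> w)))"
  have yF: "?y \<in> FA G"
    using \<pi> by (intro flincomb_FA J mono_FA) (auto simp: pair_word_not_Nil valid_word_pair_word)
  have "ftrace G t (fmul x (fstar cj x)) = ftrace G t (fmul ?y (fstar cj ?y))"
    by (intro ftrace_equiv lpa_equiv_fmul equiv lpa_equiv_fstar[OF cj equiv] fstar_FA[OF cj] x yF)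
  then show "ring_positive st (ftrace G t (fmul x (fstar cj x)))"
    using pair_max_sum_positive[OF P J \<pi>] ftrace_square_pair_words[OF J \<pi>] by simp
qed

end

theorem theorem3p4:
  fixes G :: "('v,'e) pre_digraph"
    and cj :: "'k::field \<Rightarrow> 'k"
    and sm :: "'k \<Rightarrow> 'r::ring \<Rightarrow> 'r"
    and st :: "'r \<Rightarrow> 'r"
    and t :: "('v,'e,'k) lpa \<Rightarrow> 'r"
  assumes "wf_digraph G"
    and "field_involution cj"
    and "involutive_algebra cj sm st"
    and "lpa_trace G t"
    and "lpa_trace_K_linear G sm t"
    and "lpa_trace_canonical G cj t"
  shows "lpa_trace_positive G cj st t \<longleftrightarrow>
    (\<forall>v\<in>verts G. \<forall>I. I \<subseteq> out_arcs G v \<longrightarrow> finite I \<longrightarrow>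
        ring_positive st (t (lsub G (lvert G v) (lrange_sum G I))))"
proof -
  interpret lpa_with_canonical_trace G cj sm st t
    using assms by (simp add: lpa_with_canonical_trace_def lpa_with_trace_def lpa_graph_def
        lpa_with_trace_axioms_def lpa_with_canonical_trace_axioms_def)
  show ?thesis
    using vertex_condition_if_positive positive_if_vertex_condition by blast
qed

end
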